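(* Let $(\mathcal C,\otimes,\mathbb 1,c)$ be a symmetric monoidal category and $(H,m,u,\underline\Delta,\underline\varepsilon,S,S^{-1},\Lambda,\lambda)$ an integral Hopf algebra in $\mathcal C$. If there is a morphism $\theta:\mathbb 1\to H$ with $m(\theta\otimes\theta)=u\,\underline\varepsilon\,\Lambda$, then the Frobenius algebra $(H,m,u,\Delta,\varepsilon)$ with $\Delta=(m\otimes S)(\mathrm{id}_H\otimes\underline\Delta\Lambda)$ and $\varepsilon=\lambda$ is extendable, with extended structure $\phi=\mathrm{id}_H$ and this $\theta$. In particular, when $\mathcal C$ is the category of vector spaces over an algebraically closed field $\Bbbk$ of characteristic zero, this Frobenius algebra is extendable with $\phi=\mathrm{id}_H$ and $\theta=\pm\sqrt{\underline\varepsilon(\Lambda(1_\Bbbk))}\;u(1_\Bbbk)$.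
   Context: Monoidal categories are taken strict. A Hopf algebra in symmetric monoidal $\mathcal C$ is $(H,m,u,\underline\Delta,\underline\varepsilon,S)$: an associative unital algebra and coassociative counital coalgebra with $\underline\Delta,\underline\varepsilon$ algebra morphisms and $m(S\otimes\mathrm{id})\underline\Delta=u\underline\varepsilon=m(\mathrm{id}\otimes S)\underline\Delta$. A left integral is $\Lambda:\mathbb 1\to H$ with $m(\mathrm{id}\otimes\Lambda)=\Lambda\underline\varepsilon$; a right cointegral is $\lambda:H\to\mathbb 1$ with $(\lambda\otimes\mathrm{id})\underline\Delta=u\lambda$; normalized means $\lambda\Lambda=\mathrm{id}_{\mathbb 1}$. An integral Hopf algebra has invertible antipode and a normalized pair $(\Lambda,\lambda)$. A Frobenius algebra is $(A,m,u,\Delta,\varepsilon)$ with $(m\otimes\mathrm{id})(\mathrm{id}\otimes\Delta)=\Delta m=(\mathrm{id}\otimes m)(\Delta\otimes\mathrm{id})$. An extended structure is $(\phi,\theta)$ with (i) $\phi$ a Frobenius algebra morphism, $\phi^2=\mathrm{id}$; (ii) $\phi m(\theta\otimes\mathrm{id})=m(\theta\otimes\mathrm{id})$; (iii) $m(\phi\otimes\mathrm{id})\Delta u=m(\theta\otimes\theta)$; extendable means such a pair exists. *)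

theory Defs
  imports Main
begin

text \<open>A strict symmetric monoidal category, presented by its data:
  objects, hom-sets, composition (Cmp g f = g after f), identities,
  tensor on objects and morphisms, unit object, symmetry.\<close>

record ('o, 'm) smcat =
  Obj :: "'o set"
  Hom :: "'o \<Rightarrow> 'o \<Rightarrow> 'm set"
  Cmp :: "'m \<Rightarrow> 'm \<Rightarrow> 'm"
  Idm :: "'o \<Rightarrow> 'm"
  Tob :: "'o \<Rightarrow> 'o \<Rightarrow> 'o"
  Tm  :: "'m \<Rightarrow> 'm \<Rightarrow> 'm"
  Uob  :: "'o"
  Sy  :: "'o \<Rightarrow> 'o \<Rightarrow> 'm"

definition strict_symmetric_monoidal_cat :: "('o, 'm) smcat \<Rightarrow> bool" where
  "strict_symmetric_monoidal_cat C \<longleftrightarrow>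
     
     (\<forall>A B f. f \<in> Hom C A B \<longrightarrow> A \<in> Obj C \<and> B \<in> Obj C) \<and>
     (\<forall>A\<in>Obj C. Idm C A \<in> Hom C A A) \<and>
     (\<forall>A B D f g. f \<in> Hom C A B \<longrightarrow> g \<in> Hom C B D \<longrightarrow> Cmp C g f \<in> Hom C A D) \<and>
     (\<forall>A B f. f \<in> Hom C A B \<longrightarrow> Cmp C (Idm C B) f = f \<and> Cmp C f (Idm C A) = f) \<and>
     (\<forall>A B D E f g h. f \<in> Hom C A B \<longrightarrow> g \<in> Hom C B D \<longrightarrow> h \<in> Hom C D E \<longrightarrow>
        Cmp C h (Cmp C g f) = Cmp C (Cmp C h g) f) \<and>
     
     Uob C \<in> Obj C \<and>
     (\<forall>A\<in>Obj C. \<forall>B\<in>Obj C. Tob C A B \<in> Obj C) \<and>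
     (\<forall>A B D E f g. f \<in> Hom C A B \<longrightarrow> g \<in> Hom C D E \<longrightarrow>
        Tm C f g \<in> Hom C (Tob C A D) (Tob C B E)) \<and>
     (\<forall>A\<in>Obj C. \<forall>B\<in>Obj C. Tm C (Idm C A) (Idm C B) = Idm C (Tob C A B)) \<and>
     (\<forall>A B D A' B' D' f g f' g'. f \<in> Hom C A B \<longrightarrow> g \<in> Hom C B D \<longrightarrow>
        f' \<in> Hom C A' B' \<longrightarrow> g' \<in> Hom C B' D' \<longrightarrow>
        Tm C (Cmp C g f) (Cmp C g' f') = Cmp C (Tm C g g') (Tm C f f')) \<and>
     
     (\<forall>A\<in>Obj C. \<forall>B\<in>Obj C. \<forall>D\<in>Obj C. Tob C (Tob C A B) D = Tob C A (Tob C B D)) \<and>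
     (\<forall>A B D E F G f g h. f \<in> Hom C A B \<longrightarrow> g \<in> Hom C D E \<longrightarrow> h \<in> Hom C F G \<longrightarrow>
        Tm C (Tm C f g) h = Tm C f (Tm C g h)) \<and>
     (\<forall>A\<in>Obj C. Tob C (Uob C) A = A \<and> Tob C A (Uob C) = A) \<and>
     (\<forall>A B f. f \<in> Hom C A B \<longrightarrow> Tm C (Idm C (Uob C)) f = f \<and> Tm C f (Idm C (Uob C)) = f) \<and>
     
     (\<forall>A\<in>Obj C. \<forall>B\<in>Obj C. Sy C A B \<in> Hom C (Tob C A B) (Tob C B A)) \<and>
     (\<forall>A B D E f g. f \<in> Hom C A B \<longrightarrow> g \<in> Hom C D E \<longrightarrow>
        Cmp C (Sy C B E) (Tm C f g) = Cmp C (Tm C g f) (Sy C A D)) \<and>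
     (\<forall>A\<in>Obj C. \<forall>B\<in>Obj C. Cmp C (Sy C B A) (Sy C A B) = Idm C (Tob C A B)) \<and>
     (\<forall>A\<in>Obj C. \<forall>B\<in>Obj C. \<forall>D\<in>Obj C.
        Sy C A (Tob C B D) = Cmp C (Tm C (Idm C B) (Sy C A D)) (Tm C (Sy C A B) (Idm C D)))"

definition algebra_in :: "('o, 'm) smcat \<Rightarrow> 'o \<Rightarrow> 'm \<Rightarrow> 'm \<Rightarrow> bool" where
  "algebra_in C H m u \<longleftrightarrow>
     H \<in> Obj C \<and> m \<in> Hom C (Tob C H H) H \<and> u \<in> Hom C (Uob C) H \<and>
     Cmp C m (Tm C m (Idm C H)) = Cmp C m (Tm C (Idm C H) m) \<and>
     Cmp C m (Tm C u (Idm C H)) = Idm C H \<and>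
     Cmp C m (Tm C (Idm C H) u) = Idm C H"

definition coalgebra_in :: "('o, 'm) smcat \<Rightarrow> 'o \<Rightarrow> 'm \<Rightarrow> 'm \<Rightarrow> bool" where
  "coalgebra_in C H d e \<longleftrightarrow>
     H \<in> Obj C \<and> d \<in> Hom C H (Tob C H H) \<and> e \<in> Hom C H (Uob C) \<and>
     Cmp C (Tm C d (Idm C H)) d = Cmp C (Tm C (Idm C H) d) d \<and>
     Cmp C (Tm C e (Idm C H)) d = Idm C H \<and>
     Cmp C (Tm C (Idm C H) e) d = Idm C H"

definition hopf_algebra_in ::
  "('o, 'm) smcat \<Rightarrow> 'o \<Rightarrow> 'm \<Rightarrow> 'm \<Rightarrow> 'm \<Rightarrow> 'm \<Rightarrow> 'm \<Rightarrow> bool" where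
  "hopf_algebra_in C H m u d e S \<longleftrightarrow>
     algebra_in C H m u \<and> coalgebra_in C H d e \<and>
     
     Cmp C d m = Cmp C (Tm C m m)
        (Cmp C (Tm C (Idm C H) (Tm C (Sy C H H) (Idm C H))) (Tm C d d)) \<and>
     Cmp C d u = Tm C u u \<and>
     
     Cmp C e m = Tm C e e \<and>
     Cmp C e u = Idm C (Uob C) \<and>
     
     S \<in> Hom C H H \<and>
     Cmp C m (Cmp C (Tm C S (Idm C H)) d) = Cmp C u e \<and>
     Cmp C m (Cmp C (Tm C (Idm C H) S) d) = Cmp C u e"

definition left_integral :: "('o, 'm) smcat \<Rightarrow> 'o \<Rightarrow> 'm \<Rightarrow> 'm \<Rightarrow> 'm \<Rightarrow> bool" where
  "left_integral C H m e \<Lambda> \<longleftrightarrow>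
     \<Lambda> \<in> Hom C (Uob C) H \<and> Cmp C m (Tm C (Idm C H) \<Lambda>) = Cmp C \<Lambda> e"

definition right_cointegral :: "('o, 'm) smcat \<Rightarrow> 'o \<Rightarrow> 'm \<Rightarrow> 'm \<Rightarrow> 'm \<Rightarrow> bool" where
  "right_cointegral C H u d lam \<longleftrightarrow>
     lam \<in> Hom C H (Uob C) \<and> Cmp C (Tm C lam (Idm C H)) d = Cmp C u lam"

definition integral_hopf_algebra_in ::
  "('o, 'm) smcat \<Rightarrow> 'o \<Rightarrow> 'm \<Rightarrow> 'm \<Rightarrow> 'm \<Rightarrow> 'm \<Rightarrow> 'm \<Rightarrow> 'm \<Rightarrow> 'm \<Rightarrow> 'm \<Rightarrow> bool" where
  "integral_hopf_algebra_in C H m u d e S Sinv \<Lambda> lam \<longleftrightarrow>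
     hopf_algebra_in C H m u d e S \<and>
     Sinv \<in> Hom C H H \<and> Cmp C S Sinv = Idm C H \<and> Cmp C Sinv S = Idm C H \<and>
     left_integral C H m e \<Lambda> \<and> right_cointegral C H u d lam \<and>
     Cmp C lam \<Lambda> = Idm C (Uob C)"

definition frobenius_algebra_in ::
  "('o, 'm) smcat \<Rightarrow> 'o \<Rightarrow> 'm \<Rightarrow> 'm \<Rightarrow> 'm \<Rightarrow> 'm \<Rightarrow> bool" where
  "frobenius_algebra_in C A m u d e \<longleftrightarrow>
     algebra_in C A m u \<and> coalgebra_in C A d e \<and>
     Cmp C (Tm C m (Idm C A)) (Tm C (Idm C A) d) = Cmp C d m \<and>
     Cmp C (Tm C (Idm C A) m) (Tm C d (Idm C A)) = Cmp C d m"

definition frobenius_morphism_in ::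
  "('o, 'm) smcat \<Rightarrow> 'o \<Rightarrow> 'm \<Rightarrow> 'm \<Rightarrow> 'm \<Rightarrow> 'm \<Rightarrow> 'm \<Rightarrow> bool" where
  "frobenius_morphism_in C A m u d e \<phi> \<longleftrightarrow>
     \<phi> \<in> Hom C A A \<and>
     Cmp C \<phi> m = Cmp C m (Tm C \<phi> \<phi>) \<and> Cmp C \<phi> u = u \<and>
     Cmp C (Tm C \<phi> \<phi>) d = Cmp C d \<phi> \<and> Cmp C e \<phi> = e"

definition extended_structure ::
  "('o, 'm) smcat \<Rightarrow> 'o \<Rightarrow> 'm \<Rightarrow> 'm \<Rightarrow> 'm \<Rightarrow> 'm \<Rightarrow> 'm \<Rightarrow> 'm \<Rightarrow> bool" where
  "extended_structure C A m u d e \<phi> \<theta> \<longleftrightarrow>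
     frobenius_morphism_in C A m u d e \<phi> \<and> Cmp C \<phi> \<phi> = Idm C A \<and>
     \<theta> \<in> Hom C (Uob C) A \<and>
     Cmp C \<phi> (Cmp C m (Tm C \<theta> (Idm C A))) = Cmp C m (Tm C \<theta> (Idm C A)) \<and>
     Cmp C m (Cmp C (Tm C \<phi> (Idm C A)) (Cmp C d u)) = Cmp C m (Tm C \<theta> \<theta>)"

definition extendable ::
  "('o, 'm) smcat \<Rightarrow> 'o \<Rightarrow> 'm \<Rightarrow> 'm \<Rightarrow> 'm \<Rightarrow> 'm \<Rightarrow> bool" where
  "extendable C A m u d e \<longleftrightarrow>
     frobenius_algebra_in C A m u d e \<and> (\<exists>\<phi> \<theta>. extended_structure C A m u d e \<phi> \<theta>)"

definition hopf_frobenius_coproduct ::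
  "('o, 'm) smcat \<Rightarrow> 'o \<Rightarrow> 'm \<Rightarrow> 'm \<Rightarrow> 'm \<Rightarrow> 'm \<Rightarrow> 'm" where
  "hopf_frobenius_coproduct C H m d S \<Lambda> =
     Cmp C (Tm C m S) (Tm C (Idm C H) (Cmp C d \<Lambda>))"

end

theory Submission
  imports Defs
begin

text \<open>For \<open>\<phi> = id\<close> the axioms of an extended structure reduce to
  \<open>m (\<theta> \<otimes> \<theta>) = m \<Delta> u\<close>, and for \<open>\<Delta> x = x \<Lambda>\<^sub>1 \<otimes> S \<Lambda>\<^sub>2\<close> the antipode axiom gives
  \<open>m \<Delta> u = \<Lambda>\<^sub>1 S \<Lambda>\<^sub>2 = \<epsilon>(\<Lambda>) 1\<close>; so the hypothesis on \<open>\<theta>\<close> is exactly what is needed.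
  The substance is that \<open>(H, m, u, \<Delta>, \<lambda>)\<close> is a Frobenius algebra. The left Frobenius
  identity is associativity of \<open>m\<close>; the right one amounts to
  \<open>x \<Lambda>\<^sub>1 \<otimes> S \<Lambda>\<^sub>2 = \<Lambda>\<^sub>1 \<otimes> S(\<Lambda>\<^sub>2) x\<close>, which holds because \<open>\<Lambda>\<close> is a left integral and
  \<open>S\<close> is anti-multiplicative. Coassociativity follows from the two Frobenius identities, and
  the counit laws from the cointegral property of \<open>\<lambda>\<close>, the normalisation \<open>\<lambda> \<Lambda> = 1\<close> and
  \<open>\<lambda>(S \<Lambda>) = 1\<close>.\<close>

section \<open>Strict symmetric monoidal categories\<close>

locale strict_smc =
  fixes C :: "('o, 'm) smcat"
  assumes strict_smc: "strict_symmetric_monoidal_cat C"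
begin

lemmas smc_axioms = strict_smc[unfolded strict_symmetric_monoidal_cat_def]

lemma hom_objs: "f \<in> Hom C A B \<Longrightarrow> A \<in> Obj C \<and> B \<in> Obj C"
  using smc_axioms by (elim conjE) meson
lemma id_in_hom: "A \<in> Obj C \<Longrightarrow> Idm C A \<in> Hom C A A"
  using smc_axioms by (elim conjE) meson
lemma comp_in_hom: "f \<in> Hom C A B \<Longrightarrow> g \<in> Hom C B D \<Longrightarrow> Cmp C g f \<in> Hom C A D"
  using smc_axioms by (elim conjE) meson
lemma comp_id_left: "f \<in> Hom C A B \<Longrightarrow> Cmp C (Idm C B) f = f"
  using smc_axioms by (elim conjE) meson
lemma comp_id_right: "f \<in> Hom C A B \<Longrightarrow> Cmp C f (Idm C A) = f"
  using smc_axioms by (elim conjE) meson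
lemma comp_assoc:
  "f \<in> Hom C A B \<Longrightarrow> g \<in> Hom C B D \<Longrightarrow> h \<in> Hom C D E \<Longrightarrow>
    Cmp C h (Cmp C g f) = Cmp C (Cmp C h g) f"
  using smc_axioms by (elim conjE) meson
lemma unit_obj: "Uob C \<in> Obj C"
  using smc_axioms by (elim conjE) meson
lemma tensor_obj: "A \<in> Obj C \<Longrightarrow> B \<in> Obj C \<Longrightarrow> Tob C A B \<in> Obj C"
  using smc_axioms by (elim conjE) meson
lemma tensor_in_hom:
  "f \<in> Hom C A B \<Longrightarrow> g \<in> Hom C D E \<Longrightarrow> Tm C f g \<in> Hom C (Tob C A D) (Tob C B E)"
  using smc_axioms by (elim conjE) meson
lemma tensor_id: "A \<in> Obj C \<Longrightarrow> B \<in> Obj C \<Longrightarrow> Tm C (Idm C A) (Idm C B) = Idm C (Tob C A B)"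
  using smc_axioms by (elim conjE) meson
lemma interchange:
  "f \<in> Hom C A B \<Longrightarrow> g \<in> Hom C B D \<Longrightarrow> f' \<in> Hom C A' B' \<Longrightarrow> g' \<in> Hom C B' D' \<Longrightarrow>
    Tm C (Cmp C g f) (Cmp C g' f') = Cmp C (Tm C g g') (Tm C f f')"
  using smc_axioms by (elim conjE) meson
lemma tensor_obj_assoc:
  "A \<in> Obj C \<Longrightarrow> B \<in> Obj C \<Longrightarrow> D \<in> Obj C \<Longrightarrow> Tob C (Tob C A B) D = Tob C A (Tob C B D)"
  using smc_axioms by (elim conjE) meson
lemma tensor_assoc:
  "f \<in> Hom C A B \<Longrightarrow> g \<in> Hom C D E \<Longrightarrow> h \<in> Hom C F G \<Longrightarrow>
    Tm C (Tm C f g) h = Tm C f (Tm C g h)"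
  using smc_axioms by (elim conjE) meson
lemma tensor_obj_unit_left: "A \<in> Obj C \<Longrightarrow> Tob C (Uob C) A = A"
  using smc_axioms by (elim conjE) meson
lemma tensor_obj_unit_right: "A \<in> Obj C \<Longrightarrow> Tob C A (Uob C) = A"
  using smc_axioms by (elim conjE) meson
lemma tensor_unit_left: "f \<in> Hom C A B \<Longrightarrow> Tm C (Idm C (Uob C)) f = f"
  using smc_axioms by (elim conjE) meson
lemma tensor_unit_right: "f \<in> Hom C A B \<Longrightarrow> Tm C f (Idm C (Uob C)) = f"
  using smc_axioms by (elim conjE) meson
lemma sym_in_hom: "A \<in> Obj C \<Longrightarrow> B \<in> Obj C \<Longrightarrow> Sy C A B \<in> Hom C (Tob C A B) (Tob C B A)"
  using smc_axioms by (elim conjE) meson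
lemma sym_natural:
  "f \<in> Hom C A B \<Longrightarrow> g \<in> Hom C D E \<Longrightarrow>
    Cmp C (Sy C B E) (Tm C f g) = Cmp C (Tm C g f) (Sy C A D)"
  using smc_axioms by (elim conjE) meson
lemma sym_inverse: "A \<in> Obj C \<Longrightarrow> B \<in> Obj C \<Longrightarrow> Cmp C (Sy C B A) (Sy C A B) = Idm C (Tob C A B)"
  using smc_axioms by (elim conjE) meson
lemma sym_hexagon:
  "A \<in> Obj C \<Longrightarrow> B \<in> Obj C \<Longrightarrow> D \<in> Obj C \<Longrightarrow>
    Sy C A (Tob C B D) = Cmp C (Tm C (Idm C B) (Sy C A D)) (Tm C (Sy C A B) (Idm C D))"
  using smc_axioms by (elim conjE) meson


lemma sym_unit:
  assumes A: "A \<in> Obj C"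
  shows "Sy C A (Uob C) = Idm C A" and "Sy C (Uob C) A = Idm C A"
proof -
  have U: "Uob C \<in> Obj C" by (rule unit_obj)
  let ?s = "Sy C A (Uob C)" and ?t = "Sy C (Uob C) A"
  have s: "?s \<in> Hom C A A"
    using sym_in_hom[OF A U] tensor_obj_unit_left[OF A] tensor_obj_unit_right[OF A] by simp
  have t: "?t \<in> Hom C A A"
    using sym_in_hom[OF U A] tensor_obj_unit_left[OF A] tensor_obj_unit_right[OF A] by simp
  have idem: "?s = Cmp C ?s ?s"
    using sym_hexagon[OF A U U] tensor_obj_unit_left[OF U] tensor_unit_left[OF s] tensor_unit_right[OF s]
    by simp
  have inv: "Cmp C ?t ?s = Idm C A"
    using sym_inverse[OF A U] tensor_obj_unit_right[OF A] by simp
  have "?s = Cmp C (Cmp C ?t ?s) ?s" using inv comp_id_left[OF s] by simp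
  also have "\<dots> = Cmp C ?t (Cmp C ?s ?s)" using comp_assoc[OF s s t] by simp
  also have "\<dots> = Idm C A" using idem inv by simp
  finally show s_id: "?s = Idm C A" .
  show "?t = Idm C A" using inv s_id comp_id_right[OF t] by simp
qed

text \<open>Obtained by inverting both sides of the given hexagon identity.\<close>

lemma sym_hexagon':
  assumes A: "A \<in> Obj C" and B: "B \<in> Obj C" and D: "D \<in> Obj C"
  shows "Sy C (Tob C A B) D = Cmp C (Tm C (Sy C A D) (Idm C B)) (Tm C (Idm C A) (Sy C B D))"
proof -
  have AB: "Tob C A B \<in> Obj C" using A B by (rule tensor_obj)
  have assoc: "Tob C (Tob C A B) D = Tob C A (Tob C B D)" "Tob C (Tob C D A) B = Tob C D (Tob C A B)"
    "Tob C (Tob C A D) B = Tob C A (Tob C D B)"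
    using tensor_obj_assoc A B D by auto
  let ?X = "Sy C D (Tob C A B)"
  let ?Y = "Cmp C (Tm C (Sy C A D) (Idm C B)) (Tm C (Idm C A) (Sy C B D))"
  let ?Z = "Sy C (Tob C A B) D"
  have sDA: "Sy C D A \<in> Hom C (Tob C D A) (Tob C A D)" by (rule sym_in_hom[OF D A])
  have sAD: "Sy C A D \<in> Hom C (Tob C A D) (Tob C D A)" by (rule sym_in_hom[OF A D])
  have sDB: "Sy C D B \<in> Hom C (Tob C D B) (Tob C B D)" by (rule sym_in_hom[OF D B])
  have sBD: "Sy C B D \<in> Hom C (Tob C B D) (Tob C D B)" by (rule sym_in_hom[OF B D])
  have iA: "Idm C A \<in> Hom C A A" and iB: "Idm C B \<in> Hom C B B"
    using A B by (simp_all add: id_in_hom)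
  have t1: "Tm C (Sy C D A) (Idm C B) \<in> Hom C (Tob C D (Tob C A B)) (Tob C A (Tob C D B))"
    using tensor_in_hom[OF sDA iB] assoc by simp
  have t2: "Tm C (Idm C A) (Sy C D B) \<in> Hom C (Tob C A (Tob C D B)) (Tob C A (Tob C B D))"
    using tensor_in_hom[OF iA sDB] by simp
  have t3: "Tm C (Idm C A) (Sy C B D) \<in> Hom C (Tob C A (Tob C B D)) (Tob C A (Tob C D B))"
    using tensor_in_hom[OF iA sBD] by simp
  have t4: "Tm C (Sy C A D) (Idm C B) \<in> Hom C (Tob C A (Tob C D B)) (Tob C D (Tob C A B))"
    using tensor_in_hom[OF sAD iB] assoc by simp
  have Z: "?Z \<in> Hom C (Tob C A (Tob C B D)) (Tob C D (Tob C A B))"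
    using sym_in_hom[OF AB D] assoc by simp
  have Y: "?Y \<in> Hom C (Tob C A (Tob C B D)) (Tob C D (Tob C A B))"
    using comp_in_hom[OF t3 t4] .
  have YX: "Cmp C ?Y ?X = Idm C (Tob C D (Tob C A B))"
  proof -
    have "Cmp C ?Y ?X = Cmp C (Tm C (Sy C A D) (Idm C B))
        (Cmp C (Cmp C (Tm C (Idm C A) (Sy C B D)) (Tm C (Idm C A) (Sy C D B))) (Tm C (Sy C D A) (Idm C B)))"
      unfolding sym_hexagon[OF D A B]
      using comp_assoc[OF t1 t2 t3] comp_assoc[OF comp_in_hom[OF t1 t2] t3 t4, symmetric] by simp
    also have "Cmp C (Tm C (Idm C A) (Sy C B D)) (Tm C (Idm C A) (Sy C D B)) = Idm C (Tob C A (Tob C D B))"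
      using interchange[OF iA iA sDB sBD] sym_inverse[OF D B] comp_id_left[OF iA]
        tensor_id[OF A tensor_obj[OF D B]] by simp
    also have "Cmp C (Idm C (Tob C A (Tob C D B))) (Tm C (Sy C D A) (Idm C B)) = Tm C (Sy C D A) (Idm C B)"
      using comp_id_left[OF t1] .
    also have "Cmp C (Tm C (Sy C A D) (Idm C B)) (Tm C (Sy C D A) (Idm C B)) = Idm C (Tob C D (Tob C A B))"
      using interchange[OF sDA sAD iB iB] sym_inverse[OF D A] comp_id_left[OF iB]
        tensor_id[OF tensor_obj[OF D A] B] assoc by simp
    finally show ?thesis .
  qed
  have "?Z = Cmp C (Cmp C ?Y ?X) ?Z" using YX comp_id_left[OF Z] by simp
  also have "\<dots> = Cmp C ?Y (Cmp C ?X ?Z)"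
    using comp_assoc[OF Z _ Y] sym_in_hom[OF D AB] assoc by simp
  also have "\<dots> = ?Y" using sym_inverse[OF AB D] comp_id_right[OF Y] assoc by simp
  finally show ?thesis .
qed

end

definition opposite_smc :: "('o, 'm) smcat \<Rightarrow> ('o, 'm) smcat" where
  "opposite_smc C =
     C\<lparr>Hom := (\<lambda>A B. Hom C B A), Cmp := (\<lambda>g f. Cmp C f g), Sy := (\<lambda>A B. Sy C B A)\<rparr>"

lemma opposite_smc_simps [simp]:
  "Obj (opposite_smc C) = Obj C" "Hom (opposite_smc C) A B = Hom C B A"
  "Cmp (opposite_smc C) g f = Cmp C f g" "Idm (opposite_smc C) = Idm C"
  "Tob (opposite_smc C) = Tob C" "Tm (opposite_smc C) = Tm C" "Uob (opposite_smc C) = Uob C"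
  "Sy (opposite_smc C) A B = Sy C B A"
  by (simp_all add: opposite_smc_def)

lemma (in strict_smc) strict_smc_opposite: "strict_smc (opposite_smc C)"
  unfolding strict_smc_def strict_symmetric_monoidal_cat_def opposite_smc_simps
proof (intro conjI)
  show "\<forall>A B f. f \<in> Hom C B A \<longrightarrow> A \<in> Obj C \<and> B \<in> Obj C"
    using hom_objs by blast
  show "\<forall>A\<in>Obj C. Idm C A \<in> Hom C A A"
    using id_in_hom by blast
  show "\<forall>A B D f g. f \<in> Hom C B A \<longrightarrow> g \<in> Hom C D B \<longrightarrow> Cmp C f g \<in> Hom C D A"
    using comp_in_hom by blast
  show "\<forall>A B f. f \<in> Hom C B A \<longrightarrow> Cmp C f (Idm C B) = f \<and> Cmp C (Idm C A) f = f"
    using comp_id_left comp_id_right by blast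
  show "\<forall>A B D E f g h. f \<in> Hom C B A \<longrightarrow> g \<in> Hom C D B \<longrightarrow> h \<in> Hom C E D \<longrightarrow>
      Cmp C (Cmp C f g) h = Cmp C f (Cmp C g h)"
    using comp_assoc by metis
  show "Uob C \<in> Obj C"
    by (rule unit_obj)
  show "\<forall>A\<in>Obj C. \<forall>B\<in>Obj C. Tob C A B \<in> Obj C"
    using tensor_obj by blast
  show "\<forall>A B D E f g. f \<in> Hom C B A \<longrightarrow> g \<in> Hom C E D \<longrightarrow>
      Tm C f g \<in> Hom C (Tob C B E) (Tob C A D)"
    using tensor_in_hom by blast
  show "\<forall>A\<in>Obj C. \<forall>B\<in>Obj C. Tm C (Idm C A) (Idm C B) = Idm C (Tob C A B)"
    using tensor_id by blast
  show "\<forall>A B D A' B' D' f g f' g'. f \<in> Hom C B A \<longrightarrow> g \<in> Hom C D B \<longrightarrow>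
      f' \<in> Hom C B' A' \<longrightarrow> g' \<in> Hom C D' B' \<longrightarrow>
      Tm C (Cmp C f g) (Cmp C f' g') = Cmp C (Tm C f f') (Tm C g g')"
    using interchange by metis
  show "\<forall>A\<in>Obj C. \<forall>B\<in>Obj C. \<forall>D\<in>Obj C. Tob C (Tob C A B) D = Tob C A (Tob C B D)"
    using tensor_obj_assoc by blast
  show "\<forall>A B D E F G f g h. f \<in> Hom C B A \<longrightarrow> g \<in> Hom C E D \<longrightarrow> h \<in> Hom C G F \<longrightarrow>
      Tm C (Tm C f g) h = Tm C f (Tm C g h)"
    using tensor_assoc by metis
  show "\<forall>A\<in>Obj C. Tob C (Uob C) A = A \<and> Tob C A (Uob C) = A"
    using tensor_obj_unit_left tensor_obj_unit_right by blast
  show "\<forall>A B f. f \<in> Hom C B A \<longrightarrow> Tm C (Idm C (Uob C)) f = f \<and> Tm C f (Idm C (Uob C)) = f"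
    using tensor_unit_left tensor_unit_right by blast
  show "\<forall>A\<in>Obj C. \<forall>B\<in>Obj C. Sy C B A \<in> Hom C (Tob C B A) (Tob C A B)"
    using sym_in_hom by blast
  show "\<forall>A B D E f g. f \<in> Hom C B A \<longrightarrow> g \<in> Hom C E D \<longrightarrow>
      Cmp C (Tm C f g) (Sy C E B) = Cmp C (Sy C D A) (Tm C g f)"
    using sym_natural by metis
  show "\<forall>A\<in>Obj C. \<forall>B\<in>Obj C. Cmp C (Sy C B A) (Sy C A B) = Idm C (Tob C A B)"
    using sym_inverse by blast
  show "\<forall>A\<in>Obj C. \<forall>B\<in>Obj C. \<forall>D\<in>Obj C.
      Sy C (Tob C B D) A = Cmp C (Tm C (Sy C B A) (Idm C D)) (Tm C (Idm C B) (Sy C D A))"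
    using sym_hexagon' by blast
qed

section \<open>String diagrams on tensor powers\<close>

text \<open>An arrow is a triple
  \<open>(n, f, k)\<close> recording a morphism \<open>f : H\<^sup>\<otimes>\<^sup>n \<rightarrow> H\<^sup>\<otimes>\<^sup>k\<close> together with its arities; keeping the
  arities explicit turns the object bookkeeping of the strict monoidal structure into arithmetic
  on \<open>nat\<close>, so that the simplifier can normalise diagrams.\<close>

declare One_nat_def [simp del]

type_synonym 'm arr = "nat \<times> 'm \<times> nat"

locale tensor_powers = strict_smc C for C :: "('o, 'm) smcat" +
  fixes H :: 'o
  assumes H_obj: "H \<in> Obj C"
begin

primrec tpow :: "nat \<Rightarrow> 'o" where
  "tpow 0 = Uob C"
| "tpow (Suc n) = Tob C H (tpow n)"

lemma tpow_obj [simp]: "tpow n \<in> Obj C"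
  by (induct n) (simp_all add: unit_obj tensor_obj H_obj)

lemma tpow_add: "tpow (a + b) = Tob C (tpow a) (tpow b)"
  by (induct a) (simp_all add: tensor_obj_unit_left tensor_obj_assoc H_obj)

lemma tpow_1 [simp]: "tpow 1 = H" and tpow_Suc_0 [simp]: "tpow (Suc 0) = H"
  using tensor_obj_unit_right[OF H_obj] by (simp_all add: One_nat_def)

lemma tpow_2 [simp]: "tpow 2 = Tob C H H"
  by (simp add: numeral_2_eq_2 tensor_obj_unit_right H_obj)

declare tpow.simps(2) [simp del]

definition src :: "'m arr \<Rightarrow> nat" where "src x = fst x"
definition tgt :: "'m arr \<Rightarrow> nat" where "tgt x = snd (snd x)"
definition mor :: "'m arr \<Rightarrow> 'm" where "mor x = fst (snd x)"
definition typed :: "'m arr \<Rightarrow> bool" where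
  "typed x \<longleftrightarrow> mor x \<in> Hom C (tpow (src x)) (tpow (tgt x))"

definition seq :: "'m arr \<Rightarrow> 'm arr \<Rightarrow> 'm arr" (infixr "\<odot>" 55) where
  "g \<odot> f = (src f, Cmp C (mor g) (mor f), tgt g)"
definition par :: "'m arr \<Rightarrow> 'm arr \<Rightarrow> 'm arr" (infixr "\<otimes>" 65) where
  "f \<otimes> g = (src f + src g, Tm C (mor f) (mor g), tgt f + tgt g)"
definition idn :: "nat \<Rightarrow> 'm arr" where
  "idn n = (n, Idm C (tpow n), n)"
definition swap :: "nat \<Rightarrow> nat \<Rightarrow> 'm arr" where
  "swap a b = (a + b, Sy C (tpow a) (tpow b), b + a)"
definition box :: "nat \<Rightarrow> 'm \<Rightarrow> nat \<Rightarrow> 'm arr" where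
  "box a f b = (a, f, b)"

lemma src_simps [simp]:
  "src (g \<odot> f) = src f" "src (f \<otimes> g) = src f + src g" "src (idn n) = n"
  "src (swap a b) = a + b" "src (box a k b) = a"
  by (simp_all add: src_def seq_def par_def idn_def swap_def box_def)

lemma tgt_simps [simp]:
  "tgt (g \<odot> f) = tgt g" "tgt (f \<otimes> g) = tgt f + tgt g" "tgt (idn n) = n"
  "tgt (swap a b) = b + a" "tgt (box a k b) = b"
  by (simp_all add: tgt_def seq_def par_def idn_def swap_def box_def)

lemma mor_simps [simp]:
  "mor (g \<odot> f) = Cmp C (mor g) (mor f)" "mor (f \<otimes> g) = Tm C (mor f) (mor g)"
  "mor (idn n) = Idm C (tpow n)" "mor (swap a b) = Sy C (tpow a) (tpow b)" "mor (box a k b) = k"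
  by (simp_all add: mor_def seq_def par_def idn_def swap_def box_def)

lemma arr_eqI: "src x = src y \<Longrightarrow> tgt x = tgt y \<Longrightarrow> mor x = mor y \<Longrightarrow> x = y"
  by (cases x; cases y) (simp add: src_def tgt_def mor_def)

lemma typed_seq [simp]: "typed f \<Longrightarrow> typed g \<Longrightarrow> tgt f = src g \<Longrightarrow> typed (g \<odot> f)"
  unfolding typed_def by (auto intro: comp_in_hom)
lemma typed_par [simp]: "typed f \<Longrightarrow> typed g \<Longrightarrow> typed (f \<otimes> g)"
  unfolding typed_def using tensor_in_hom by (simp add: tpow_add)
lemma typed_idn [simp]: "typed (idn n)"
  unfolding typed_def by (simp add: id_in_hom)
lemma typed_swap [simp]: "typed (swap a b)"
  unfolding typed_def by (simp add: sym_in_hom tpow_add)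
lemma typed_box: "typed (box a f b) \<longleftrightarrow> f \<in> Hom C (tpow a) (tpow b)"
  unfolding typed_def by simp

lemma typedD: "typed f \<Longrightarrow> mor f \<in> Hom C (tpow (src f)) (tpow (tgt f))"
  by (simp add: typed_def)

lemma seq_assoc:
  "typed f \<Longrightarrow> typed g \<Longrightarrow> typed h \<Longrightarrow> tgt f = src g \<Longrightarrow> tgt g = src h \<Longrightarrow>
    (h \<odot> g) \<odot> f = h \<odot> (g \<odot> f)"
  by (rule arr_eqI) (auto dest!: typedD simp: comp_assoc)
lemma seq_idn_left: "typed f \<Longrightarrow> tgt f = n \<Longrightarrow> idn n \<odot> f = f"
  by (rule arr_eqI) (auto dest!: typedD simp: comp_id_left)
lemma seq_idn_right: "typed f \<Longrightarrow> src f = n \<Longrightarrow> f \<odot> idn n = f"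
  by (rule arr_eqI) (auto dest!: typedD simp: comp_id_right)
lemma par_assoc: "typed f \<Longrightarrow> typed g \<Longrightarrow> typed h \<Longrightarrow> (f \<otimes> g) \<otimes> h = f \<otimes> (g \<otimes> h)"
  by (rule arr_eqI) (auto dest!: typedD simp: tensor_assoc)
lemma par_idn: "idn a \<otimes> idn b = idn (a + b)"
  by (rule arr_eqI) (auto simp: tensor_id tpow_add)
lemma par_idn_0_left: "typed f \<Longrightarrow> idn 0 \<otimes> f = f"
  by (rule arr_eqI) (auto dest!: typedD simp: tensor_unit_left)
lemma par_idn_0_right: "typed f \<Longrightarrow> f \<otimes> idn 0 = f"
  by (rule arr_eqI) (auto dest!: typedD simp: tensor_unit_right)
lemma par_seq:
  "typed f \<Longrightarrow> typed g \<Longrightarrow> typed f' \<Longrightarrow> typed g' \<Longrightarrow> tgt f = src g \<Longrightarrow> tgt f' = src g' \<Longrightarrow>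
    (g \<odot> f) \<otimes> (g' \<odot> f') = (g \<otimes> g') \<odot> (f \<otimes> f')"
  by (rule arr_eqI) (auto dest!: typedD simp: interchange)
lemma swap_natural:
  "typed f \<Longrightarrow> typed g \<Longrightarrow> swap (tgt f) (tgt g) \<odot> (f \<otimes> g) = (g \<otimes> f) \<odot> swap (src f) (src g)"
  by (rule arr_eqI) (auto dest!: typedD simp: sym_natural)
lemma swap_0: "swap a 0 = idn a" "swap 0 a = idn a"
  by (rule arr_eqI; simp add: sym_unit)+
lemma swap_hexagon: "swap a (b + c) = (idn b \<otimes> swap a c) \<odot> (swap a b \<otimes> idn c)"
  by (rule arr_eqI) (auto simp: sym_hexagon tpow_add)
lemma swap_hexagon': "swap (a + b) c = (swap a c \<otimes> idn b) \<odot> (idn a \<otimes> swap b c)"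
  by (rule arr_eqI) (auto simp: sym_hexagon' tpow_add)

lemma par_def_left: "typed f \<Longrightarrow> typed g \<Longrightarrow> f \<otimes> g = (f \<otimes> idn (tgt g)) \<odot> (idn (src f) \<otimes> g)"
  by (subst par_seq[symmetric]) (simp_all add: seq_idn_left seq_idn_right)
lemma par_def_right: "typed f \<Longrightarrow> typed g \<Longrightarrow> f \<otimes> g = (idn (tgt f) \<otimes> g) \<odot> (f \<otimes> idn (src g))"
  by (subst par_seq[symmetric]) (simp_all add: seq_idn_left seq_idn_right)
lemma seq_par_idn:
  "typed f \<Longrightarrow> typed g \<Longrightarrow> tgt f = src g \<Longrightarrow> (g \<odot> f) \<otimes> idn n = (g \<otimes> idn n) \<odot> (f \<otimes> idn n)"
  by (subst par_seq[symmetric]) (simp_all add: seq_idn_left)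
lemma idn_par_seq:
  "typed f \<Longrightarrow> typed g \<Longrightarrow> tgt f = src g \<Longrightarrow> idn n \<otimes> (g \<odot> f) = (idn n \<otimes> g) \<odot> (idn n \<otimes> f)"
  by (subst par_seq[symmetric]) (simp_all add: seq_idn_left)
lemma par_effect_left: "typed f \<Longrightarrow> typed g \<Longrightarrow> tgt f = 0 \<Longrightarrow> f \<otimes> g = g \<odot> (f \<otimes> idn (src g))"
  using par_seq[of f "idn 0" "idn (src g)" g] by (simp add: seq_idn_left seq_idn_right par_idn_0_left)
lemma par_effect_right: "typed f \<Longrightarrow> typed g \<Longrightarrow> tgt f = 0 \<Longrightarrow> g \<otimes> f = g \<odot> (idn (src g) \<otimes> f)"
  using par_seq[of "idn (src g)" g f "idn 0"] by (simp add: seq_idn_left seq_idn_right par_idn_0_right)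

lemma seq_rewrite:
  "g \<odot> f = h \<Longrightarrow> typed f \<Longrightarrow> typed g \<Longrightarrow> typed x \<Longrightarrow> tgt f = src g \<Longrightarrow> tgt x = src f \<Longrightarrow>
    g \<odot> (f \<odot> x) = h \<odot> x"
  by (simp add: seq_assoc[symmetric])
lemma seq_rewrite3:
  "c \<odot> (b \<odot> a) = h \<Longrightarrow> typed a \<Longrightarrow> typed b \<Longrightarrow> typed c \<Longrightarrow> typed x \<Longrightarrow>
    tgt a = src b \<Longrightarrow> tgt b = src c \<Longrightarrow> tgt x = src a \<Longrightarrow> c \<odot> (b \<odot> (a \<odot> x)) = h \<odot> x"
  by (simp add: seq_assoc[symmetric])

text \<open>Interchange in the association patterns that occur below; together with associativity and
  the unit laws these form a normalising simp set.\<close>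

lemma seq_par_merge:
  "typed f \<Longrightarrow> typed g \<Longrightarrow> typed f' \<Longrightarrow> typed g' \<Longrightarrow> tgt f = src g \<Longrightarrow> tgt f' = src g' \<Longrightarrow>
    (g \<otimes> g') \<odot> (f \<otimes> f') = (g \<odot> f) \<otimes> (g' \<odot> f')"
  by (simp add: par_seq)
lemma seq_par_merge_tail:
  "typed f \<Longrightarrow> typed g \<Longrightarrow> typed f' \<Longrightarrow> typed g' \<Longrightarrow> typed x \<Longrightarrow> tgt f = src g \<Longrightarrow> tgt f' = src g' \<Longrightarrow>
    tgt x = src f + src f' \<Longrightarrow> (g \<otimes> g') \<odot> ((f \<otimes> f') \<odot> x) = ((g \<odot> f) \<otimes> (g' \<odot> f')) \<odot> x"
  by (simp add: par_seq seq_assoc[symmetric])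
lemma seq_par_merge_left:
  "typed f \<Longrightarrow> typed g1 \<Longrightarrow> typed g2 \<Longrightarrow> typed g3 \<Longrightarrow> typed f' \<Longrightarrow> tgt f = src g1 + src g2 \<Longrightarrow>
    tgt f' = src g3 \<Longrightarrow> (g1 \<otimes> (g2 \<otimes> g3)) \<odot> (f \<otimes> f') = ((g1 \<otimes> g2) \<odot> f) \<otimes> (g3 \<odot> f')"
  by (simp add: par_seq par_assoc[symmetric])
lemma seq_par_merge_left_tail:
  "typed f \<Longrightarrow> typed g1 \<Longrightarrow> typed g2 \<Longrightarrow> typed g3 \<Longrightarrow> typed f' \<Longrightarrow> typed x \<Longrightarrow>
    tgt f = src g1 + src g2 \<Longrightarrow> tgt f' = src g3 \<Longrightarrow> tgt x = src f + src f' \<Longrightarrow>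
    (g1 \<otimes> (g2 \<otimes> g3)) \<odot> ((f \<otimes> f') \<odot> x) = (((g1 \<otimes> g2) \<odot> f) \<otimes> (g3 \<odot> f')) \<odot> x"
  by (simp add: par_seq par_assoc[symmetric] seq_assoc[symmetric])
lemma seq_par_merge_right:
  "typed f1 \<Longrightarrow> typed f2 \<Longrightarrow> typed f3 \<Longrightarrow> typed g \<Longrightarrow> typed g' \<Longrightarrow> tgt f1 + tgt f2 = src g \<Longrightarrow>
    tgt f3 = src g' \<Longrightarrow> (g \<otimes> g') \<odot> (f1 \<otimes> (f2 \<otimes> f3)) = (g \<odot> (f1 \<otimes> f2)) \<otimes> (g' \<odot> f3)"
  by (simp add: par_seq par_assoc[symmetric])
lemma seq_par_merge_right_tail:
  "typed f1 \<Longrightarrow> typed f2 \<Longrightarrow> typed f3 \<Longrightarrow> typed g \<Longrightarrow> typed g' \<Longrightarrow> typed x \<Longrightarrow>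
    tgt f1 + tgt f2 = src g \<Longrightarrow> tgt f3 = src g' \<Longrightarrow> tgt x = src f1 + src f2 + src f3 \<Longrightarrow>
    (g \<otimes> g') \<odot> ((f1 \<otimes> (f2 \<otimes> f3)) \<odot> x) = ((g \<odot> (f1 \<otimes> f2)) \<otimes> (g' \<odot> f3)) \<odot> x"
  by (simp add: par_seq par_assoc[symmetric] seq_assoc[symmetric])
lemma seq_par_merge_both:
  "typed f1 \<Longrightarrow> typed f2 \<Longrightarrow> typed f3 \<Longrightarrow> typed g1 \<Longrightarrow> typed g2 \<Longrightarrow> typed g3 \<Longrightarrow>
    tgt f1 + tgt f2 = src g1 + src g2 \<Longrightarrow> tgt f3 = src g3 \<Longrightarrow>
    (g1 \<otimes> (g2 \<otimes> g3)) \<odot> (f1 \<otimes> (f2 \<otimes> f3)) = ((g1 \<otimes> g2) \<odot> (f1 \<otimes> f2)) \<otimes> (g3 \<odot> f3)"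
  by (simp add: par_seq par_assoc[symmetric])
lemma seq_par_merge_both_tail:
  "typed f1 \<Longrightarrow> typed f2 \<Longrightarrow> typed f3 \<Longrightarrow> typed g1 \<Longrightarrow> typed g2 \<Longrightarrow> typed g3 \<Longrightarrow> typed x \<Longrightarrow>
    tgt f1 + tgt f2 = src g1 + src g2 \<Longrightarrow> tgt f3 = src g3 \<Longrightarrow> tgt x = src f1 + src f2 + src f3 \<Longrightarrow>
    (g1 \<otimes> (g2 \<otimes> g3)) \<odot> ((f1 \<otimes> (f2 \<otimes> f3)) \<odot> x) = (((g1 \<otimes> g2) \<odot> (f1 \<otimes> f2)) \<otimes> (g3 \<odot> f3)) \<odot> x"
  by (simp add: par_seq par_assoc[symmetric] seq_assoc[symmetric])

lemma idn_2: "idn 2 = idn 1 \<otimes> idn 1"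
  by (simp add: par_idn)
lemma idn_3: "idn 3 = idn 1 \<otimes> idn 1 \<otimes> idn 1"
  by (simp add: par_idn)
lemma idn_4: "idn 4 = idn 1 \<otimes> idn 1 \<otimes> idn 1 \<otimes> idn 1"
  by (simp add: par_idn)
lemma seq_idn_2_left: "typed f \<Longrightarrow> tgt f = 2 \<Longrightarrow> (idn 1 \<otimes> idn 1) \<odot> f = f"
  by (simp add: par_idn seq_idn_left)
lemma seq_idn_2_right: "typed f \<Longrightarrow> src f = 2 \<Longrightarrow> f \<odot> (idn 1 \<otimes> idn 1) = f"
  by (simp add: par_idn seq_idn_right)
lemma seq_idn_3_left: "typed f \<Longrightarrow> tgt f = 3 \<Longrightarrow> (idn 1 \<otimes> idn 1 \<otimes> idn 1) \<odot> f = f"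
  by (simp add: par_idn seq_idn_left)
lemma seq_idn_3_right: "typed f \<Longrightarrow> src f = 3 \<Longrightarrow> f \<odot> (idn 1 \<otimes> idn 1 \<otimes> idn 1) = f"
  by (simp add: par_idn seq_idn_right)

lemmas diagram_simps = seq_assoc par_assoc seq_idn_left seq_idn_right par_idn_0_left par_idn_0_right
  seq_par_merge seq_par_merge_tail seq_par_merge_left seq_par_merge_left_tail
  seq_par_merge_right seq_par_merge_right_tail seq_par_merge_both seq_par_merge_both_tail
  idn_2 idn_3 idn_4 seq_idn_2_left seq_idn_2_right seq_idn_3_left seq_idn_3_right

end

section \<open>The antipode of a Hopf algebra\<close>

locale hopf_algebra = tensor_powers C H for C :: "('o, 'm) smcat" and H +
  fixes m u d e S :: 'm
  assumes hopf: "hopf_algebra_in C H m u d e S"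
begin

abbreviation "\<mu> \<equiv> box 2 m 1"
abbreviation "\<eta> \<equiv> box 0 u 1"
abbreviation "\<delta> \<equiv> box 1 d 2"
abbreviation "\<epsilon> \<equiv> box 1 e 0"
abbreviation "s \<equiv> box 1 S 1"
abbreviation "\<iota> \<equiv> idn 1"
abbreviation "\<sigma> \<equiv> swap 1 1"

lemmas hopf_unfolded = hopf[unfolded hopf_algebra_in_def algebra_in_def coalgebra_in_def]

lemma typed_structure_maps [simp]: "typed \<mu>" "typed \<eta>" "typed \<delta>" "typed \<epsilon>" "typed s"
  using hopf_unfolded by (simp_all add: typed_box)

lemma mult_assoc: "\<mu> \<odot> (\<mu> \<otimes> \<iota>) = \<mu> \<odot> (\<iota> \<otimes> \<mu>)"
  by (rule arr_eqI) (use hopf_unfolded in simp_all)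
lemma mult_unit_left: "\<mu> \<odot> (\<eta> \<otimes> \<iota>) = \<iota>"
  by (rule arr_eqI) (use hopf_unfolded in simp_all)
lemma mult_unit_right: "\<mu> \<odot> (\<iota> \<otimes> \<eta>) = \<iota>"
  by (rule arr_eqI) (use hopf_unfolded in simp_all)
lemma comult_coassoc: "(\<delta> \<otimes> \<iota>) \<odot> \<delta> = (\<iota> \<otimes> \<delta>) \<odot> \<delta>"
  by (rule arr_eqI) (use hopf_unfolded in simp_all)
lemma comult_counit_left: "(\<epsilon> \<otimes> \<iota>) \<odot> \<delta> = \<iota>"
  by (rule arr_eqI) (use hopf_unfolded in simp_all)
lemma comult_counit_right: "(\<iota> \<otimes> \<epsilon>) \<odot> \<delta> = \<iota>"
  by (rule arr_eqI) (use hopf_unfolded in simp_all)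
lemma comult_mult: "\<delta> \<odot> \<mu> = (\<mu> \<otimes> \<mu>) \<odot> ((\<iota> \<otimes> (\<sigma> \<otimes> \<iota>)) \<odot> (\<delta> \<otimes> \<delta>))"
  by (rule arr_eqI) (use hopf_unfolded in simp_all)
lemma comult_unit: "\<delta> \<odot> \<eta> = \<eta> \<otimes> \<eta>"
  by (rule arr_eqI) (use hopf_unfolded in simp_all)
lemma counit_mult: "\<epsilon> \<odot> \<mu> = \<epsilon> \<otimes> \<epsilon>"
  by (rule arr_eqI) (use hopf_unfolded in simp_all)
lemma counit_unit: "\<epsilon> \<odot> \<eta> = idn 0"
  by (rule arr_eqI) (use hopf_unfolded in simp_all)
lemma antipode_left: "\<mu> \<odot> ((s \<otimes> \<iota>) \<odot> \<delta>) = \<eta> \<odot> \<epsilon>"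
  by (rule arr_eqI) (use hopf_unfolded in simp_all)
lemma antipode_right: "\<mu> \<odot> ((\<iota> \<otimes> s) \<odot> \<delta>) = \<eta> \<odot> \<epsilon>"
  by (rule arr_eqI) (use hopf_unfolded in simp_all)

lemma antipode_unit: "s \<odot> \<eta> = \<eta>"
proof -
  have "s \<odot> \<eta> = \<mu> \<odot> ((\<iota> \<otimes> \<eta>) \<odot> (s \<odot> \<eta>))"
    by (simp add: diagram_simps seq_rewrite[OF mult_unit_right])
  also have "(\<iota> \<otimes> \<eta>) \<odot> (s \<odot> \<eta>) = (s \<odot> \<eta>) \<otimes> \<eta>"
    by (subst par_def_right[of "s \<odot> \<eta>"]) (simp_all add: diagram_simps)
  also have "\<dots> = (s \<otimes> \<iota>) \<odot> (\<eta> \<otimes> \<eta>)"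
    by (subst par_seq[symmetric]) (simp_all add: diagram_simps)
  also have "\<dots> = (s \<otimes> \<iota>) \<odot> (\<delta> \<odot> \<eta>)"
    by (simp add: comult_unit)
  also have "\<mu> \<odot> ((s \<otimes> \<iota>) \<odot> (\<delta> \<odot> \<eta>)) = (\<eta> \<odot> \<epsilon>) \<odot> \<eta>"
    by (simp add: diagram_simps antipode_left[symmetric])
  also have "\<dots> = \<eta>"
    by (simp add: diagram_simps counit_unit)
  finally show ?thesis .
qed

lemma mult_unit_par_left:
  assumes "typed y" "typed b" "tgt y = 0" "tgt b = 1"
  shows "\<mu> \<odot> ((\<eta> \<odot> y) \<otimes> b) = y \<otimes> b"
proof -
  have "\<mu> \<odot> ((\<eta> \<odot> y) \<otimes> b) = (\<mu> \<odot> (\<eta> \<otimes> \<iota>)) \<odot> (y \<otimes> b)"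
    using assms by (simp add: diagram_simps)
  then show ?thesis using assms by (simp add: mult_unit_left diagram_simps)
qed

lemma mult_unit_par_right:
  assumes "typed y" "typed b" "tgt y = 0" "tgt b = 1"
  shows "\<mu> \<odot> (b \<otimes> (\<eta> \<odot> y)) = b \<otimes> y"
proof -
  have "\<mu> \<odot> (b \<otimes> (\<eta> \<odot> y)) = (\<mu> \<odot> (\<iota> \<otimes> \<eta>)) \<odot> (b \<otimes> y)"
    using assms by (simp add: diagram_simps)
  then show ?thesis using assms by (simp add: mult_unit_right diagram_simps)
qed

lemma mult_unit_par_left_tail:
  "typed y \<Longrightarrow> typed b \<Longrightarrow> typed x \<Longrightarrow> tgt y = 0 \<Longrightarrow> tgt b = 1 \<Longrightarrow> tgt x = src y + src b \<Longrightarrow>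
    \<mu> \<odot> (((\<eta> \<odot> y) \<otimes> b) \<odot> x) = (y \<otimes> b) \<odot> x"
  by (simp add: seq_assoc[symmetric] mult_unit_par_left)
lemma mult_unit_par_right_tail:
  "typed y \<Longrightarrow> typed b \<Longrightarrow> typed x \<Longrightarrow> tgt y = 0 \<Longrightarrow> tgt b = 1 \<Longrightarrow> tgt x = src b + src y \<Longrightarrow>
    \<mu> \<odot> ((b \<otimes> (\<eta> \<odot> y)) \<odot> x) = (b \<otimes> y) \<odot> x"
  by (simp add: seq_assoc[symmetric] mult_unit_par_right)

lemma mult_par_mult: "\<mu> \<odot> (\<mu> \<otimes> \<mu>) = \<mu> \<odot> (\<iota> \<otimes> \<mu>) \<odot> (\<iota> \<otimes> \<mu> \<otimes> \<iota>)"
proof -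
  have "\<mu> \<odot> (\<mu> \<otimes> \<mu>) = \<mu> \<odot> (\<mu> \<otimes> \<iota>) \<odot> (\<iota> \<otimes> \<iota> \<otimes> \<mu>)"
    by (simp add: diagram_simps)
  also have "\<dots> = \<mu> \<odot> (\<iota> \<otimes> \<mu>) \<odot> (\<iota> \<otimes> \<iota> \<otimes> \<mu>)"
    by (simp add: seq_rewrite[OF mult_assoc] seq_assoc)
  also have "\<dots> = \<mu> \<odot> (\<iota> \<otimes> (\<mu> \<odot> (\<iota> \<otimes> \<mu>)))"
    by (simp add: diagram_simps)
  also have "\<dots> = \<mu> \<odot> (\<iota> \<otimes> (\<mu> \<odot> (\<mu> \<otimes> \<iota>)))"
    by (simp only: mult_assoc)
  also have "\<dots> = \<mu> \<odot> (\<iota> \<otimes> \<mu>) \<odot> (\<iota> \<otimes> \<mu> \<otimes> \<iota>)"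
    by (simp add: diagram_simps)
  finally show ?thesis .
qed

lemma swap_2_1: "swap 2 1 = (\<sigma> \<otimes> \<iota>) \<odot> (\<iota> \<otimes> \<sigma>)"
  using swap_hexagon'[of 1 1 1] by simp
lemma swap_1_2: "swap 1 2 = (\<iota> \<otimes> \<sigma>) \<odot> (\<sigma> \<otimes> \<iota>)"
  using swap_hexagon[of 1 1 1] by simp

lemma counit_idn_swap: "(\<epsilon> \<otimes> \<iota>) \<odot> \<sigma> = \<iota> \<otimes> \<epsilon>"
  using swap_natural[of \<iota> \<epsilon>] by (simp add: swap_0 seq_idn_left)
lemma idn_counit_swap: "(\<iota> \<otimes> \<epsilon>) \<odot> \<sigma> = \<epsilon> \<otimes> \<iota>"
  using swap_natural[of \<epsilon> \<iota>] by (simp add: swap_0 seq_idn_left)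
lemma antipode_counit_swap: "(s \<otimes> \<epsilon>) \<odot> \<sigma> = \<epsilon> \<otimes> s"
  using swap_natural[of \<epsilon> s] by (simp add: swap_0 seq_idn_left)
lemma comult_idn_swap: "(\<delta> \<otimes> \<iota>) \<odot> \<sigma> = swap 1 2 \<odot> (\<iota> \<otimes> \<delta>)"
  using swap_natural[of \<iota> \<delta>] by simp
lemma idn_comult_swap: "(\<iota> \<otimes> \<delta>) \<odot> \<sigma> = swap 2 1 \<odot> (\<delta> \<otimes> \<iota>)"
  using swap_natural[of \<delta> \<iota>] by simp

text \<open>The convolution monoid of maps \<open>H \<otimes> H \<rightarrow> H\<close>, whose comultiplication is that of the
  tensor product bialgebra \<open>H \<otimes> H\<close>.\<close>

definition comult2 :: "'m arr" where
  "comult2 = (\<iota> \<otimes> \<sigma> \<otimes> \<iota>) \<odot> (\<delta> \<otimes> \<delta>)"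
definition conv :: "'m arr \<Rightarrow> 'm arr \<Rightarrow> 'm arr" where
  "conv f g = \<mu> \<odot> (f \<otimes> g) \<odot> comult2"
definition conv_unit :: "'m arr" where
  "conv_unit = \<eta> \<odot> (\<epsilon> \<otimes> \<epsilon>)"
definition comult3 :: "'m arr" where
  "comult3 = (\<iota> \<otimes> \<delta>) \<odot> \<delta>"

lemma typed_comult2 [simp]: "typed comult2" "src comult2 = 2" "tgt comult2 = 4"
  by (simp_all add: comult2_def)
lemma typed_conv_unit [simp]: "typed conv_unit" "src conv_unit = 2" "tgt conv_unit = 1"
  by (simp_all add: conv_unit_def)
lemma typed_conv [simp]:
  "typed f \<Longrightarrow> typed g \<Longrightarrow> src f = 2 \<Longrightarrow> src g = 2 \<Longrightarrow> tgt f = 1 \<Longrightarrow> tgt g = 1 \<Longrightarrow> typed (conv f g)"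
  by (simp add: conv_def)
lemma conv_arities [simp]: "src (conv f g) = 2" "tgt (conv f g) = 1"
  by (simp_all add: conv_def)
lemma typed_comult3 [simp]: "typed comult3" "src comult3 = 1" "tgt comult3 = 3"
  by (simp_all add: comult3_def)

lemma conv_unit_left:
  assumes "typed f" "src f = 2" "tgt f = 1"
  shows "conv conv_unit f = f"
proof -
  have "conv conv_unit f = ((\<epsilon> \<otimes> \<epsilon>) \<otimes> f) \<odot> comult2"
    using assms by (simp add: conv_def conv_unit_def mult_unit_par_left_tail)
  also have "\<dots> = f \<odot> (\<epsilon> \<otimes> \<epsilon> \<otimes> \<iota> \<otimes> \<iota>) \<odot> comult2"
    using assms par_effect_left[of "\<epsilon> \<otimes> \<epsilon>" f] by (simp add: seq_assoc idn_2 par_assoc)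
  also have "\<dots> = f"
    using assms by (simp add: diagram_simps comult2_def counit_idn_swap comult_counit_left)
  finally show ?thesis .
qed

lemma conv_unit_right:
  assumes "typed f" "src f = 2" "tgt f = 1"
  shows "conv f conv_unit = f"
proof -
  have "conv f conv_unit = (f \<otimes> (\<epsilon> \<otimes> \<epsilon>)) \<odot> comult2"
    using assms by (simp add: conv_def conv_unit_def mult_unit_par_right_tail)
  also have "\<dots> = f \<odot> (\<iota> \<otimes> \<iota> \<otimes> \<epsilon> \<otimes> \<epsilon>) \<odot> comult2"
    using assms par_effect_right[of "\<epsilon> \<otimes> \<epsilon>" f] by (simp add: seq_assoc idn_2 par_assoc)
  also have "\<dots> = f"
    using assms by (simp add: diagram_simps comult2_def idn_counit_swap comult_counit_right)
  finally show ?thesis .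
qed

lemma comult2_assoc_left:
  "(comult2 \<otimes> \<iota> \<otimes> \<iota>) \<odot> comult2 =
    (\<iota> \<otimes> \<sigma> \<otimes> \<iota> \<otimes> \<iota> \<otimes> \<iota>) \<odot> (\<iota> \<otimes> \<iota> \<otimes> swap 1 2 \<otimes> \<iota>) \<odot> (comult3 \<otimes> comult3)"
proof -
  have x1: "((\<iota> \<otimes> \<sigma> \<otimes> \<iota>) \<odot> (\<delta> \<otimes> \<delta>)) \<otimes> \<iota> \<otimes> \<iota> = (\<iota> \<otimes> \<sigma> \<otimes> \<iota> \<otimes> \<iota> \<otimes> \<iota>) \<odot> (\<delta> \<otimes> \<delta> \<otimes> \<iota> \<otimes> \<iota>)"
    using par_seq[of "\<delta> \<otimes> \<delta>" "\<iota> \<otimes> \<sigma> \<otimes> \<iota>" "\<iota> \<otimes> \<iota>" "\<iota> \<otimes> \<iota>"]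
    by (simp add: seq_idn_2_left par_assoc)
  have x2: "(\<delta> \<otimes> \<delta> \<otimes> \<iota> \<otimes> \<iota>) \<odot> (\<iota> \<otimes> \<sigma> \<otimes> \<iota>) \<odot> (\<delta> \<otimes> \<delta>) = (\<delta> \<otimes> ((\<delta> \<otimes> \<iota>) \<odot> \<sigma>) \<otimes> \<iota>) \<odot> (\<delta> \<otimes> \<delta>)"
    by (simp add: diagram_simps)
  have x3: "\<delta> \<otimes> (swap 1 2 \<odot> (\<iota> \<otimes> \<delta>)) \<otimes> \<iota> = (\<iota> \<otimes> \<iota> \<otimes> swap 1 2 \<otimes> \<iota>) \<odot> (\<delta> \<otimes> \<iota> \<otimes> \<delta> \<otimes> \<iota>)"
    by (simp add: diagram_simps)
  have x4: "(\<delta> \<otimes> \<iota> \<otimes> \<delta> \<otimes> \<iota>) \<odot> (\<delta> \<otimes> \<delta>) = comult3 \<otimes> comult3"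
    by (simp add: diagram_simps comult_coassoc comult3_def)
  have "(comult2 \<otimes> \<iota> \<otimes> \<iota>) \<odot> comult2 =
      (\<iota> \<otimes> \<sigma> \<otimes> \<iota> \<otimes> \<iota> \<otimes> \<iota>) \<odot> (\<delta> \<otimes> \<delta> \<otimes> \<iota> \<otimes> \<iota>) \<odot> (\<iota> \<otimes> \<sigma> \<otimes> \<iota>) \<odot> (\<delta> \<otimes> \<delta>)"
    unfolding comult2_def by (simp only: x1; simp add: seq_assoc)
  also have "\<dots> = (\<iota> \<otimes> \<sigma> \<otimes> \<iota> \<otimes> \<iota> \<otimes> \<iota>) \<odot> (\<delta> \<otimes> (swap 1 2 \<odot> (\<iota> \<otimes> \<delta>)) \<otimes> \<iota>) \<odot> (\<delta> \<otimes> \<delta>)"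
    by (simp only: x2 comult_idn_swap)
  also have "\<dots> = (\<iota> \<otimes> \<sigma> \<otimes> \<iota> \<otimes> \<iota> \<otimes> \<iota>) \<odot> (\<iota> \<otimes> \<iota> \<otimes> swap 1 2 \<otimes> \<iota>) \<odot> (\<delta> \<otimes> \<iota> \<otimes> \<delta> \<otimes> \<iota>) \<odot> (\<delta> \<otimes> \<delta>)"
    by (simp only: x3; simp add: seq_assoc)
  also have "\<dots> = (\<iota> \<otimes> \<sigma> \<otimes> \<iota> \<otimes> \<iota> \<otimes> \<iota>) \<odot> (\<iota> \<otimes> \<iota> \<otimes> swap 1 2 \<otimes> \<iota>) \<odot> (comult3 \<otimes> comult3)"
    by (simp only: x4)
  finally show ?thesis .
qed

lemma comult2_assoc_right:
  "(\<iota> \<otimes> \<iota> \<otimes> comult2) \<odot> comult2 =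
    (\<iota> \<otimes> \<iota> \<otimes> \<iota> \<otimes> \<sigma> \<otimes> \<iota>) \<odot> (\<iota> \<otimes> swap 2 1 \<otimes> \<iota> \<otimes> \<iota>) \<odot> (comult3 \<otimes> comult3)"
proof -
  have x1: "\<iota> \<otimes> \<iota> \<otimes> ((\<iota> \<otimes> \<sigma> \<otimes> \<iota>) \<odot> (\<delta> \<otimes> \<delta>)) = (\<iota> \<otimes> \<iota> \<otimes> \<iota> \<otimes> \<sigma> \<otimes> \<iota>) \<odot> (\<iota> \<otimes> \<iota> \<otimes> \<delta> \<otimes> \<delta>)"
    by (simp add: diagram_simps)
  have x2: "(\<iota> \<otimes> \<iota> \<otimes> \<delta> \<otimes> \<delta>) \<odot> (\<iota> \<otimes> \<sigma> \<otimes> \<iota>) = \<iota> \<otimes> ((\<iota> \<otimes> \<delta>) \<odot> \<sigma>) \<otimes> \<delta>"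
    by (simp add: diagram_simps)
  have x3: "\<iota> \<otimes> (swap 2 1 \<odot> (\<delta> \<otimes> \<iota>)) \<otimes> \<delta> = (\<iota> \<otimes> swap 2 1 \<otimes> \<iota> \<otimes> \<iota>) \<odot> (\<iota> \<otimes> \<delta> \<otimes> \<iota> \<otimes> \<delta>)"
    by (simp add: diagram_simps)
  have x4: "(\<iota> \<otimes> \<delta> \<otimes> \<iota> \<otimes> \<delta>) \<odot> (\<delta> \<otimes> \<delta>) = comult3 \<otimes> comult3"
    by (simp add: diagram_simps comult3_def)
  have "(\<iota> \<otimes> \<iota> \<otimes> comult2) \<odot> comult2 =
      (\<iota> \<otimes> \<iota> \<otimes> \<iota> \<otimes> \<sigma> \<otimes> \<iota>) \<odot> ((\<iota> \<otimes> \<iota> \<otimes> \<delta> \<otimes> \<delta>) \<odot> (\<iota> \<otimes> \<sigma> \<otimes> \<iota>)) \<odot> (\<delta> \<otimes> \<delta>)"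
    unfolding comult2_def by (simp only: x1; simp add: seq_assoc)
  also have "\<dots> = (\<iota> \<otimes> \<iota> \<otimes> \<iota> \<otimes> \<sigma> \<otimes> \<iota>) \<odot> (\<iota> \<otimes> (swap 2 1 \<odot> (\<delta> \<otimes> \<iota>)) \<otimes> \<delta>) \<odot> (\<delta> \<otimes> \<delta>)"
    by (simp only: x2 idn_comult_swap)
  also have "\<dots> = (\<iota> \<otimes> \<iota> \<otimes> \<iota> \<otimes> \<sigma> \<otimes> \<iota>) \<odot> (\<iota> \<otimes> swap 2 1 \<otimes> \<iota> \<otimes> \<iota>) \<odot> (\<iota> \<otimes> \<delta> \<otimes> \<iota> \<otimes> \<delta>) \<odot> (\<delta> \<otimes> \<delta>)"
    by (simp only: x3; simp add: seq_assoc)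
  also have "\<dots> = (\<iota> \<otimes> \<iota> \<otimes> \<iota> \<otimes> \<sigma> \<otimes> \<iota>) \<odot> (\<iota> \<otimes> swap 2 1 \<otimes> \<iota> \<otimes> \<iota>) \<odot> (comult3 \<otimes> comult3)"
    by (simp only: x4)
  finally show ?thesis .
qed

lemma swap_braid:
  "(\<sigma> \<otimes> \<iota> \<otimes> \<iota> \<otimes> \<iota>) \<odot> (\<iota> \<otimes> ((\<iota> \<otimes> \<sigma>) \<odot> (\<sigma> \<otimes> \<iota>)) \<otimes> \<iota>) =
    (\<iota> \<otimes> \<iota> \<otimes> \<sigma> \<otimes> \<iota>) \<odot> (((\<sigma> \<otimes> \<iota>) \<odot> (\<iota> \<otimes> \<sigma>)) \<otimes> \<iota> \<otimes> \<iota>)"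
proof -
  have l: "\<iota> \<otimes> ((\<iota> \<otimes> \<sigma>) \<odot> (\<sigma> \<otimes> \<iota>)) \<otimes> \<iota> = (\<iota> \<otimes> \<iota> \<otimes> \<sigma> \<otimes> \<iota>) \<odot> (\<iota> \<otimes> \<sigma> \<otimes> \<iota> \<otimes> \<iota>)"
    and r: "((\<sigma> \<otimes> \<iota>) \<odot> (\<iota> \<otimes> \<sigma>)) \<otimes> \<iota> \<otimes> \<iota> = (\<sigma> \<otimes> \<iota> \<otimes> \<iota> \<otimes> \<iota>) \<odot> (\<iota> \<otimes> \<sigma> \<otimes> \<iota> \<otimes> \<iota>)"
    and disjoint: "(\<sigma> \<otimes> \<iota> \<otimes> \<iota> \<otimes> \<iota>) \<odot> (\<iota> \<otimes> \<iota> \<otimes> \<sigma> \<otimes> \<iota>) = (\<iota> \<otimes> \<iota> \<otimes> \<sigma> \<otimes> \<iota>) \<odot> (\<sigma> \<otimes> \<iota> \<otimes> \<iota> \<otimes> \<iota>)"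
    by (simp_all add: diagram_simps)
  show ?thesis
    unfolding l r by (simp add: seq_assoc[symmetric] disjoint del: idn_2)
qed

lemma comult2_coassoc: "(comult2 \<otimes> \<iota> \<otimes> \<iota>) \<odot> comult2 = (\<iota> \<otimes> \<iota> \<otimes> comult2) \<odot> comult2"
proof -
  have "(\<iota> \<otimes> \<sigma> \<otimes> \<iota> \<otimes> \<iota> \<otimes> \<iota>) \<odot> (\<iota> \<otimes> \<iota> \<otimes> swap 1 2 \<otimes> \<iota>) =
      (\<iota> \<otimes> \<iota> \<otimes> \<iota> \<otimes> \<sigma> \<otimes> \<iota>) \<odot> (\<iota> \<otimes> swap 2 1 \<otimes> \<iota> \<otimes> \<iota>)"
    by (simp add: diagram_simps swap_1_2 swap_2_1 swap_braid)
  then show ?thesis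
    unfolding comult2_assoc_left comult2_assoc_right by (simp add: seq_assoc[symmetric])
qed

lemma conv_assoc:
  assumes "typed f" "typed g" "typed h" "src f = 2" "src g = 2" "src h = 2"
    and "tgt f = 1" "tgt g = 1" "tgt h = 1"
  shows "conv (conv f g) h = conv f (conv g h)"
proof -
  have "conv (conv f g) h = (\<mu> \<odot> (\<mu> \<otimes> \<iota>)) \<odot> ((f \<otimes> g \<otimes> h) \<odot> ((comult2 \<otimes> \<iota> \<otimes> \<iota>) \<odot> comult2))"
    using assms by (simp add: diagram_simps conv_def)
  also have "\<dots> = (\<mu> \<odot> (\<iota> \<otimes> \<mu>)) \<odot> ((f \<otimes> g \<otimes> h) \<odot> ((\<iota> \<otimes> \<iota> \<otimes> comult2) \<odot> comult2))"
    by (simp only: mult_assoc comult2_coassoc)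
  also have "\<dots> = conv f (conv g h)"
    using assms by (simp add: diagram_simps conv_def)
  finally show ?thesis .
qed

lemma conv_mult_antipode_mult: "conv \<mu> (s \<odot> \<mu>) = conv_unit"
proof -
  have "conv \<mu> (s \<odot> \<mu>) = \<mu> \<odot> (\<iota> \<otimes> s) \<odot> (\<delta> \<odot> \<mu>)"
    by (simp add: diagram_simps comult_mult conv_def comult2_def)
  also have "\<dots> = (\<eta> \<odot> \<epsilon>) \<odot> \<mu>"
    by (simp add: diagram_simps seq_rewrite3[OF antipode_right])
  also have "\<dots> = conv_unit"
    by (simp add: diagram_simps counit_mult conv_unit_def)
  finally show ?thesis .
qed

lemma swap_comult_comult:
  "(\<sigma> \<otimes> \<iota> \<otimes> \<iota>) \<odot> (\<iota> \<otimes> \<sigma> \<otimes> \<iota>) \<odot> (\<delta> \<otimes> \<delta>) = (\<iota> \<otimes> \<delta> \<otimes> \<iota>) \<odot> (\<sigma> \<otimes> \<iota>) \<odot> (\<iota> \<otimes> \<delta>)"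
proof -
  have "(\<sigma> \<otimes> \<iota> \<otimes> \<iota>) \<odot> (\<iota> \<otimes> \<sigma> \<otimes> \<iota>) \<odot> (\<delta> \<otimes> \<delta>) = (swap 2 1 \<otimes> \<iota>) \<odot> ((\<delta> \<otimes> \<iota> \<otimes> \<iota>) \<odot> (\<iota> \<otimes> \<delta>))"
    by (simp add: diagram_simps swap_2_1)
  also have "\<dots> = ((swap 2 1 \<odot> (\<delta> \<otimes> \<iota>)) \<otimes> \<iota>) \<odot> (\<iota> \<otimes> \<delta>)"
    by (subst seq_par_merge_right_tail) (simp_all add: seq_idn_left)
  also have "\<dots> = (\<iota> \<otimes> \<delta> \<otimes> \<iota>) \<odot> (\<sigma> \<otimes> \<iota>) \<odot> (\<iota> \<otimes> \<delta>)"
    by (simp add: idn_comult_swap[symmetric] diagram_simps)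
  finally show ?thesis .
qed

lemma conv_anti_mult_mult: "conv (\<mu> \<odot> (s \<otimes> s) \<odot> \<sigma>) \<mu> = conv_unit"
proof -
  have antipode_cancel: "\<mu> \<odot> (\<mu> \<otimes> \<mu>) \<odot> (s \<otimes> s \<otimes> \<iota> \<otimes> \<iota>) \<odot> (\<iota> \<otimes> \<delta> \<otimes> \<iota>) \<odot> x =
      \<mu> \<odot> (s \<otimes> \<epsilon> \<otimes> \<iota>) \<odot> x" if "typed x" "tgt x = 3" for x
    using that by (simp add: diagram_simps seq_rewrite[OF mult_par_mult] antipode_left mult_unit_par_left)
  have "(\<mu> \<odot> (s \<otimes> s) \<odot> \<sigma>) \<otimes> \<mu> = (\<mu> \<otimes> \<mu>) \<odot> (s \<otimes> s \<otimes> \<iota> \<otimes> \<iota>) \<odot> (\<sigma> \<otimes> \<iota> \<otimes> \<iota>)"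
    by (simp add: diagram_simps)
  then have "conv (\<mu> \<odot> (s \<otimes> s) \<odot> \<sigma>) \<mu> =
      \<mu> \<odot> (\<mu> \<otimes> \<mu>) \<odot> (s \<otimes> s \<otimes> \<iota> \<otimes> \<iota>) \<odot> (\<sigma> \<otimes> \<iota> \<otimes> \<iota>) \<odot> (\<iota> \<otimes> \<sigma> \<otimes> \<iota>) \<odot> (\<delta> \<otimes> \<delta>)"
    by (simp add: conv_def comult2_def seq_assoc)
  also have "\<dots> = \<mu> \<odot> (\<mu> \<otimes> \<mu>) \<odot> (s \<otimes> s \<otimes> \<iota> \<otimes> \<iota>) \<odot> (\<iota> \<otimes> \<delta> \<otimes> \<iota>) \<odot> (\<sigma> \<otimes> \<iota>) \<odot> (\<iota> \<otimes> \<delta>)"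
    by (simp only: swap_comult_comult)
  also have "\<dots> = \<mu> \<odot> (s \<otimes> \<epsilon> \<otimes> \<iota>) \<odot> (\<sigma> \<otimes> \<iota>) \<odot> (\<iota> \<otimes> \<delta>)"
    by (simp add: antipode_cancel)
  also have "\<dots> = \<mu> \<odot> (\<epsilon> \<otimes> ((s \<otimes> \<iota>) \<odot> \<delta>))"
    by (simp add: diagram_simps antipode_counit_swap)
  also have "\<dots> = (\<mu> \<odot> ((s \<otimes> \<iota>) \<odot> \<delta>)) \<odot> (\<epsilon> \<otimes> \<iota>)"
    using par_effect_left[of \<epsilon> "(s \<otimes> \<iota>) \<odot> \<delta>"] by (simp add: seq_assoc)
  also have "\<dots> = conv_unit"
    using par_effect_left[of \<epsilon> \<epsilon>] by (simp add: antipode_left seq_assoc conv_unit_def)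
  finally show ?thesis .
qed

text \<open>Both sides are convolution inverses of \<open>\<mu>\<close>.\<close>

lemma antipode_anti_mult: "s \<odot> \<mu> = \<mu> \<odot> (s \<otimes> s) \<odot> \<sigma>"
proof -
  let ?a = "\<mu> \<odot> (s \<otimes> s) \<odot> \<sigma>"
  have "?a = conv ?a (conv \<mu> (s \<odot> \<mu>))"
    by (simp add: conv_mult_antipode_mult conv_unit_right)
  also have "\<dots> = conv (conv ?a \<mu>) (s \<odot> \<mu>)"
    by (simp add: conv_assoc)
  also have "\<dots> = s \<odot> \<mu>"
    by (simp add: conv_anti_mult_mult conv_unit_left)
  finally show ?thesis by simp
qed

text \<open>Reversing composition exchanges the algebra and coalgebra structures, so
  anti-comultiplicativity of the antipode is anti-multiplicativity in the opposite category.\<close>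

lemma hopf_algebra_opposite: "hopf_algebra (opposite_smc C) H d e m u S"
proof -
  have HH: "Tob C H H \<in> Obj C" using H_obj by (simp add: tensor_obj)
  have dh: "d \<in> Hom C H (Tob C H H)" and mh: "m \<in> Hom C (Tob C H H) H" and Sh: "S \<in> Hom C H H"
    using hopf_unfolded by blast+
  have i: "Idm C H \<in> Hom C H H" using H_obj by (rule id_in_hom)
  have H4: "Tob C (Tob C H H) (Tob C H H) = Tob C H (Tob C H (Tob C H H))"
    using H_obj HH by (simp add: tensor_obj_assoc)
  have sw: "Tm C (Idm C H) (Tm C (Sy C H H) (Idm C H))
      \<in> Hom C (Tob C H (Tob C H (Tob C H H))) (Tob C H (Tob C H (Tob C H H)))"
    using tensor_in_hom[OF i tensor_in_hom[OF sym_in_hom[OF H_obj H_obj] i]] H_obj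
    by (simp add: tensor_obj_assoc)
  have dd: "Tm C d d \<in> Hom C (Tob C H H) (Tob C H (Tob C H (Tob C H H)))"
    using tensor_in_hom[OF dh dh] H4 by simp
  have mm: "Tm C m m \<in> Hom C (Tob C H (Tob C H (Tob C H H))) (Tob C H H)"
    using tensor_in_hom[OF mh mh] H4 by simp
  have "Cmp C (Cmp C (Tm C m m) (Tm C (Idm C H) (Tm C (Sy C H H) (Idm C H)))) (Tm C d d)
     = Cmp C (Tm C m m) (Cmp C (Tm C (Idm C H) (Tm C (Sy C H H) (Idm C H))) (Tm C d d))"
    and "Cmp C (Cmp C m (Tm C S (Idm C H))) d = Cmp C m (Cmp C (Tm C S (Idm C H)) d)"
    and "Cmp C (Cmp C m (Tm C (Idm C H) S)) d = Cmp C m (Cmp C (Tm C (Idm C H) S) d)"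
    using comp_assoc[OF dd sw mm] comp_assoc[OF dh _ mh] tensor_in_hom[OF Sh i] tensor_in_hom[OF i Sh]
    by simp_all
  then show ?thesis
    unfolding hopf_algebra_def hopf_algebra_axioms_def tensor_powers_def tensor_powers_axioms_def
    using strict_smc_opposite H_obj hopf_unfolded
    unfolding hopf_algebra_in_def algebra_in_def coalgebra_in_def opposite_smc_simps
    by metis
qed

lemma antipode_anti_comult: "\<delta> \<odot> s = \<sigma> \<odot> (s \<otimes> s) \<odot> \<delta>"
proof -
  have anti_mult_mor: "Cmp C S m = Cmp C m (Cmp C (Tm C S S) (Sy C H H))"
    if "hopf_algebra C H m u d e S" for C :: "('o, 'm) smcat" and m u d e
    using arg_cong[OF hopf_algebra.antipode_anti_mult[OF that], of "tensor_powers.mor"]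
    by (simp add: tensor_powers.mor_simps[OF hopf_algebra.axioms(1)[OF that]]
        tensor_powers.tpow_1[OF hopf_algebra.axioms(1)[OF that]])
  have "Cmp C d S = Cmp C (Cmp C (Sy C H H) (Tm C S S)) d"
    using anti_mult_mor[OF hopf_algebra_opposite] by simp
  then have "\<delta> \<odot> s = (\<sigma> \<odot> (s \<otimes> s)) \<odot> \<delta>"
    by (intro arr_eqI) simp_all
  then show ?thesis by (simp add: seq_assoc)
qed

end

section \<open>The Frobenius structure of an integral Hopf algebra\<close>

locale integral_hopf_algebra = hopf_algebra C H m u d e S
  for C :: "('o, 'm) smcat" and H m u d e S +
  fixes Sinv \<Lambda> lam :: 'm
  assumes integral: "integral_hopf_algebra_in C H m u d e S Sinv \<Lambda> lam"
begin

abbreviation "sinv \<equiv> box 1 Sinv 1"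
abbreviation "integ \<equiv> box 0 \<Lambda> 1"
abbreviation "cointeg \<equiv> box 1 lam 0"

lemmas integral_unfolded =
  integral[unfolded integral_hopf_algebra_in_def left_integral_def right_cointegral_def]

lemma typed_integral_maps [simp]: "typed sinv" "typed integ" "typed cointeg"
  using integral_unfolded by (simp_all add: typed_box)

lemma antipode_inv_left: "sinv \<odot> s = \<iota>"
  by (rule arr_eqI) (use integral_unfolded in simp_all)
lemma integ_left: "\<mu> \<odot> (\<iota> \<otimes> integ) = integ \<odot> \<epsilon>"
  by (rule arr_eqI) (use integral_unfolded in simp_all)
lemma cointeg_right: "(cointeg \<otimes> \<iota>) \<odot> \<delta> = \<eta> \<odot> cointeg"
  by (rule arr_eqI) (use integral_unfolded in simp_all)
lemma cointeg_integ: "cointeg \<odot> integ = idn 0"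
  by (rule arr_eqI) (use integral_unfolded in simp_all)

text \<open>In Sweedler notation, \<open>copair = \<Lambda>\<^sub>1 \<otimes> S \<Lambda>\<^sub>2\<close> and
  \<open>frob_comult x = x \<Lambda>\<^sub>1 \<otimes> S \<Lambda>\<^sub>2\<close>.\<close>

definition comult_integral :: "'m arr" where
  "comult_integral = \<delta> \<odot> integ"
definition copair :: "'m arr" where
  "copair = (\<iota> \<otimes> s) \<odot> comult_integral"
definition frob_comult :: "'m arr" where
  "frob_comult = (\<mu> \<otimes> s) \<odot> (\<iota> \<otimes> comult_integral)"

lemma typed_comult_integral [simp]:
  "typed comult_integral" "src comult_integral = 0" "tgt comult_integral = 2"
  by (simp_all add: comult_integral_def)
lemma typed_copair [simp]: "typed copair" "src copair = 0" "tgt copair = 2"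
  by (simp_all add: copair_def)
lemma typed_frob_comult [simp]: "typed frob_comult" "src frob_comult = 1" "tgt frob_comult = 2"
  by (simp_all add: frob_comult_def)

lemma mor_frob_comult: "mor frob_comult = hopf_frobenius_coproduct C H m d S \<Lambda>"
  by (simp add: hopf_frobenius_coproduct_def frob_comult_def comult_integral_def)

lemma frob_comult_mult_left: "frob_comult = (\<mu> \<otimes> \<iota>) \<odot> (\<iota> \<otimes> copair)"
proof -
  have "(\<mu> \<otimes> \<iota>) \<odot> (\<iota> \<otimes> copair) = (\<mu> \<otimes> \<iota>) \<odot> ((\<iota> \<otimes> \<iota> \<otimes> s) \<odot> (\<iota> \<otimes> comult_integral))"
    unfolding copair_def by (simp add: diagram_simps)
  also have "\<dots> = ((\<mu> \<odot> (\<iota> \<otimes> \<iota>)) \<otimes> (\<iota> \<odot> s)) \<odot> (\<iota> \<otimes> comult_integral)"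
    by (subst seq_par_merge_right_tail) simp_all
  also have "\<dots> = frob_comult"
    by (simp add: frob_comult_def diagram_simps)
  finally show ?thesis by simp
qed

lemma mult_frob_comult_unit: "\<mu> \<odot> (frob_comult \<odot> \<eta>) = \<eta> \<odot> (\<epsilon> \<odot> integ)"
proof -
  have "(\<iota> \<otimes> comult_integral) \<odot> \<eta> = (\<eta> \<otimes> \<iota> \<otimes> \<iota>) \<odot> comult_integral"
    using par_def_left[of \<eta> comult_integral] par_def_right[of \<eta> comult_integral]
    by (simp add: par_idn_0_left par_idn_0_right idn_2 par_assoc)
  then have "frob_comult \<odot> \<eta> = copair"
    by (simp add: frob_comult_def copair_def seq_assoc diagram_simps mult_unit_left)
  then show ?thesis
    by (simp add: copair_def comult_integral_def seq_rewrite3[OF antipode_right] seq_assoc)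
qed

lemma frobenius_left: "(\<mu> \<otimes> \<iota>) \<odot> (\<iota> \<otimes> frob_comult) = frob_comult \<odot> \<mu>"
proof -
  have "(\<mu> \<otimes> \<iota>) \<odot> (\<iota> \<otimes> frob_comult) = (\<mu> \<otimes> \<iota>) \<odot> ((\<iota> \<otimes> \<mu> \<otimes> \<iota>) \<odot> (\<iota> \<otimes> \<iota> \<otimes> copair))"
    unfolding frob_comult_mult_left by (simp add: diagram_simps)
  also have "\<dots> = ((\<mu> \<odot> (\<iota> \<otimes> \<mu>)) \<otimes> \<iota>) \<odot> (\<iota> \<otimes> \<iota> \<otimes> copair)"
    by (subst seq_par_merge_right_tail) (simp_all add: seq_idn_left)
  also have "\<dots> = ((\<mu> \<odot> (\<mu> \<otimes> \<iota>)) \<otimes> \<iota>) \<odot> (\<iota> \<otimes> \<iota> \<otimes> copair)"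
    by (simp only: mult_assoc)
  also have "\<dots> = (\<mu> \<otimes> \<iota>) \<odot> ((\<mu> \<otimes> \<iota> \<otimes> \<iota>) \<odot> (\<iota> \<otimes> \<iota> \<otimes> copair))"
    by (subst seq_par_merge_right_tail) (simp_all add: seq_idn_left)
  also have "(\<mu> \<otimes> \<iota> \<otimes> \<iota>) \<odot> (\<iota> \<otimes> \<iota> \<otimes> copair) = (\<iota> \<otimes> copair) \<odot> \<mu>"
    using par_def_left[of \<mu> copair] par_def_right[of \<mu> copair]
    by (simp add: par_idn_0_right idn_2 par_assoc)
  also have "(\<mu> \<otimes> \<iota>) \<odot> ((\<iota> \<otimes> copair) \<odot> \<mu>) = frob_comult \<odot> \<mu>"
    by (simp add: frob_comult_mult_left seq_assoc)
  finally show ?thesis .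
qed

text \<open>\<open>y\<^sub>1 \<Lambda>\<^sub>1 \<otimes> y\<^sub>2 \<Lambda>\<^sub>2 = \<epsilon>(y) \<Lambda>\<^sub>1 \<otimes> \<Lambda>\<^sub>2\<close>, as \<open>y \<Lambda> = \<epsilon>(y) \<Lambda>\<close>.\<close>

lemma comult_integral_mult:
  "(\<mu> \<otimes> \<mu>) \<odot> (\<iota> \<otimes> \<sigma> \<otimes> \<iota>) \<odot> (\<delta> \<otimes> comult_integral) = comult_integral \<odot> \<epsilon>"
proof -
  have "\<delta> \<odot> (\<mu> \<odot> (\<iota> \<otimes> integ)) = \<delta> \<odot> (integ \<odot> \<epsilon>)"
    using integ_left by simp
  then show ?thesis
    unfolding comult_integral_def by (simp add: seq_rewrite[OF comult_mult] diagram_simps)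
qed

definition pair_mult_antipode :: "'m arr" where
  "pair_mult_antipode = (\<iota> \<otimes> s) \<odot> (\<mu> \<otimes> \<mu>) \<odot> (\<iota> \<otimes> \<sigma> \<otimes> \<iota>)"
definition antipode_mult3 :: "'m arr" where
  "antipode_mult3 = \<mu> \<odot> (s \<otimes> (\<mu> \<odot> (s \<otimes> \<iota>)))"

lemma typed_pair_mult_antipode [simp]:
  "typed pair_mult_antipode" "src pair_mult_antipode = 4" "tgt pair_mult_antipode = 2"
  by (simp_all add: pair_mult_antipode_def)
lemma typed_antipode_mult3 [simp]:
  "typed antipode_mult3" "src antipode_mult3 = 3" "tgt antipode_mult3 = 1"
  by (simp_all add: antipode_mult3_def)

lemma mult_anti_mult_idn: "\<mu> \<odot> ((\<mu> \<odot> (s \<otimes> s) \<odot> \<sigma>) \<otimes> \<iota>) = antipode_mult3 \<odot> (\<sigma> \<otimes> \<iota>)"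
proof -
  have "(\<iota> \<otimes> \<mu>) \<odot> (s \<otimes> s \<otimes> \<iota>) = s \<otimes> (\<mu> \<odot> (s \<otimes> \<iota>))"
    by (simp add: diagram_simps)
  then have inner: "(\<iota> \<otimes> \<mu>) \<odot> ((s \<otimes> s \<otimes> \<iota>) \<odot> (\<sigma> \<otimes> \<iota>)) = (s \<otimes> (\<mu> \<odot> (s \<otimes> \<iota>))) \<odot> (\<sigma> \<otimes> \<iota>)"
    by (simp add: seq_assoc[symmetric])
  have "\<mu> \<odot> ((\<mu> \<odot> (s \<otimes> s) \<odot> \<sigma>) \<otimes> \<iota>) = (\<mu> \<odot> (\<mu> \<otimes> \<iota>)) \<odot> (((s \<otimes> s) \<odot> \<sigma>) \<otimes> \<iota>)"
    by (simp add: diagram_simps)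
  also have "\<dots> = (\<mu> \<odot> (\<iota> \<otimes> \<mu>)) \<odot> ((s \<otimes> s \<otimes> \<iota>) \<odot> (\<sigma> \<otimes> \<iota>))"
    using seq_par_idn[of \<sigma> "s \<otimes> s" 1] by (simp add: par_assoc mult_assoc)
  also have "\<dots> = antipode_mult3 \<odot> (\<sigma> \<otimes> \<iota>)"
    by (simp add: seq_assoc antipode_mult3_def inner)
  finally show ?thesis .
qed

lemma mult_pair_mult_antipode:
  "(\<iota> \<otimes> \<mu>) \<odot> (pair_mult_antipode \<otimes> \<iota>) = (\<mu> \<otimes> antipode_mult3) \<odot> (\<iota> \<otimes> swap 1 2 \<otimes> \<iota>)"
proof -
  have "pair_mult_antipode = (\<mu> \<otimes> (\<mu> \<odot> (s \<otimes> s) \<odot> \<sigma>)) \<odot> (\<iota> \<otimes> \<sigma> \<otimes> \<iota>)"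
    by (simp add: pair_mult_antipode_def diagram_simps antipode_anti_mult)
  then have "pair_mult_antipode \<otimes> \<iota> = (\<mu> \<otimes> (\<mu> \<odot> (s \<otimes> s) \<odot> \<sigma>) \<otimes> \<iota>) \<odot> (\<iota> \<otimes> \<sigma> \<otimes> \<iota> \<otimes> \<iota>)"
    using seq_par_idn[of "\<iota> \<otimes> \<sigma> \<otimes> \<iota>" "\<mu> \<otimes> (\<mu> \<odot> (s \<otimes> s) \<odot> \<sigma>)" 1] by (simp add: par_assoc)
  then have "(\<iota> \<otimes> \<mu>) \<odot> (pair_mult_antipode \<otimes> \<iota>) =
      (\<mu> \<otimes> (\<mu> \<odot> ((\<mu> \<odot> (s \<otimes> s) \<odot> \<sigma>) \<otimes> \<iota>))) \<odot> (\<iota> \<otimes> \<sigma> \<otimes> \<iota> \<otimes> \<iota>)"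
    by (simp add: diagram_simps)
  also have "\<dots> = (\<mu> \<otimes> (antipode_mult3 \<odot> (\<sigma> \<otimes> \<iota>))) \<odot> (\<iota> \<otimes> \<sigma> \<otimes> \<iota> \<otimes> \<iota>)"
    by (simp only: mult_anti_mult_idn)
  also have "\<dots> = (\<mu> \<otimes> antipode_mult3) \<odot> (\<iota> \<otimes> swap 1 2 \<otimes> \<iota>)"
  proof -
    have "\<mu> \<otimes> (antipode_mult3 \<odot> (\<sigma> \<otimes> \<iota>)) = (\<mu> \<otimes> antipode_mult3) \<odot> (\<iota> \<otimes> \<iota> \<otimes> \<sigma> \<otimes> \<iota>)"
      and "(\<iota> \<otimes> \<iota> \<otimes> \<sigma> \<otimes> \<iota>) \<odot> (\<iota> \<otimes> \<sigma> \<otimes> \<iota> \<otimes> \<iota>) = \<iota> \<otimes> ((\<iota> \<otimes> \<sigma>) \<odot> (\<sigma> \<otimes> \<iota>)) \<otimes> \<iota>"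
      by (simp_all add: diagram_simps)
    then show ?thesis by (simp add: swap_1_2 seq_assoc del: idn_2)
  qed
  finally show ?thesis .
qed

lemma swap_comult_integral:
  "(\<iota> \<otimes> swap 1 2 \<otimes> \<iota>) \<odot> (\<delta> \<otimes> comult_integral \<otimes> \<iota>) = (\<iota> \<otimes> comult_integral \<otimes> \<iota> \<otimes> \<iota>) \<odot> (\<delta> \<otimes> \<iota>)"
proof -
  have swap_E: "swap 1 2 \<odot> (\<iota> \<otimes> comult_integral) = comult_integral \<otimes> \<iota>"
    using swap_natural[of \<iota> comult_integral] by (simp add: swap_0 seq_idn_right)
  have "\<delta> \<otimes> comult_integral = (\<iota> \<otimes> \<iota> \<otimes> comult_integral) \<odot> \<delta>"
    using par_def_right[of \<delta> comult_integral] by (simp add: par_idn_0_right idn_2 par_assoc)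
  then have "(\<iota> \<otimes> swap 1 2 \<otimes> \<iota>) \<odot> (\<delta> \<otimes> comult_integral \<otimes> \<iota>) =
      (((\<iota> \<otimes> swap 1 2) \<odot> (\<iota> \<otimes> \<iota> \<otimes> comult_integral)) \<odot> \<delta>) \<otimes> \<iota>"
    by (simp add: diagram_simps)
  also have "\<dots> = ((\<iota> \<otimes> comult_integral \<otimes> \<iota>) \<odot> \<delta>) \<otimes> \<iota>"
    by (simp add: diagram_simps swap_E)
  also have "\<dots> = (\<iota> \<otimes> comult_integral \<otimes> \<iota> \<otimes> \<iota>) \<odot> (\<delta> \<otimes> \<iota>)"
    using seq_par_idn[of \<delta> "\<iota> \<otimes> comult_integral \<otimes> \<iota>" 1] by (simp add: par_assoc)
  finally show ?thesis .
qed

lemma antipode_mult3_comult: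
  "(\<mu> \<otimes> antipode_mult3) \<odot> (\<iota> \<otimes> comult_integral \<otimes> \<iota> \<otimes> \<iota>) \<odot> (\<iota> \<otimes> \<delta>) \<odot> \<delta> = frob_comult"
proof -
  have slide1: "(comult_integral \<otimes> \<iota> \<otimes> \<iota>) \<odot> \<delta> = (\<iota> \<otimes> \<iota> \<otimes> \<delta>) \<odot> (comult_integral \<otimes> \<iota>)"
    using par_def_left[of comult_integral \<delta>] par_def_right[of comult_integral \<delta>]
    by (simp add: par_idn_0_left idn_2 par_assoc)
  have slide: "(\<iota> \<otimes> comult_integral \<otimes> \<iota> \<otimes> \<iota>) \<odot> (\<iota> \<otimes> \<delta>) =
      (\<iota> \<otimes> \<iota> \<otimes> \<iota> \<otimes> \<delta>) \<odot> (\<iota> \<otimes> comult_integral \<otimes> \<iota>)"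
  proof -
    have "(\<iota> \<otimes> comult_integral \<otimes> \<iota> \<otimes> \<iota>) \<odot> (\<iota> \<otimes> \<delta>) = \<iota> \<otimes> ((comult_integral \<otimes> \<iota> \<otimes> \<iota>) \<odot> \<delta>)"
      by (simp add: diagram_simps)
    also have "\<dots> = \<iota> \<otimes> ((\<iota> \<otimes> \<iota> \<otimes> \<delta>) \<odot> (comult_integral \<otimes> \<iota>))"
      by (simp only: slide1)
    also have "\<dots> = (\<iota> \<otimes> \<iota> \<otimes> \<iota> \<otimes> \<delta>) \<odot> (\<iota> \<otimes> comult_integral \<otimes> \<iota>)"
      by (simp add: diagram_simps)
    finally show ?thesis .
  qed
  have cancel: "(\<mu> \<otimes> antipode_mult3) \<odot> (\<iota> \<otimes> \<iota> \<otimes> \<iota> \<otimes> \<delta>) = \<mu> \<otimes> (s \<otimes> \<epsilon>)"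
    by (simp add: diagram_simps antipode_mult3_def antipode_left mult_unit_par_right)
  have "(\<mu> \<otimes> antipode_mult3) \<odot> (\<iota> \<otimes> comult_integral \<otimes> \<iota> \<otimes> \<iota>) \<odot> (\<iota> \<otimes> \<delta>) \<odot> \<delta> =
      ((\<mu> \<otimes> antipode_mult3) \<odot> (\<iota> \<otimes> \<iota> \<otimes> \<iota> \<otimes> \<delta>)) \<odot> (\<iota> \<otimes> comult_integral \<otimes> \<iota>) \<odot> \<delta>"
    by (simp add: seq_assoc[symmetric] slide del: idn_2)
  also have "\<dots> = (frob_comult \<otimes> \<epsilon>) \<odot> \<delta>"
    by (simp only: cancel; simp add: diagram_simps frob_comult_def)
  also have "\<dots> = frob_comult"
    using par_effect_right[of \<epsilon> frob_comult] by (simp add: seq_assoc comult_counit_right seq_idn_right)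
  finally show ?thesis .
qed

text \<open>Writing
  \<open>\<Lambda>\<^sub>1 \<otimes> S(\<Lambda>\<^sub>2) x = x\<^sub>1 \<Lambda>\<^sub>1 \<otimes> S(x\<^sub>2 \<Lambda>\<^sub>2) x\<^sub>3\<close> by \<open>comult_integral_mult\<close>,
  anti-multiplicativity of \<open>S\<close> and the antipode axiom on \<open>S(x\<^sub>2) x\<^sub>3\<close> finish.\<close>

lemma frob_comult_mult_right: "(\<iota> \<otimes> \<mu>) \<odot> (copair \<otimes> \<iota>) = frob_comult"
proof -
  have counit_split: "(copair \<otimes> \<iota>) \<odot> ((\<epsilon> \<otimes> \<iota>) \<odot> \<delta>) = ((copair \<odot> \<epsilon>) \<otimes> \<iota>) \<odot> \<delta>"
    by (subst seq_par_merge_tail) (simp_all add: seq_idn_left)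
  have copair_counit: "copair \<odot> \<epsilon> = pair_mult_antipode \<odot> (\<delta> \<otimes> comult_integral)"
    unfolding copair_def pair_mult_antipode_def by (simp add: seq_assoc comult_integral_mult[symmetric])
  have "(\<iota> \<otimes> \<mu>) \<odot> (copair \<otimes> \<iota>) = (\<iota> \<otimes> \<mu>) \<odot> ((copair \<otimes> \<iota>) \<odot> ((\<epsilon> \<otimes> \<iota>) \<odot> \<delta>))"
    by (simp add: comult_counit_left seq_idn_right)
  also have "\<dots> = (\<iota> \<otimes> \<mu>) \<odot> (((pair_mult_antipode \<odot> (\<delta> \<otimes> comult_integral)) \<otimes> \<iota>) \<odot> \<delta>)"
    by (simp only: counit_split copair_counit)
  also have "\<dots> = ((\<iota> \<otimes> \<mu>) \<odot> (pair_mult_antipode \<otimes> \<iota>)) \<odot> ((\<delta> \<otimes> comult_integral \<otimes> \<iota>) \<odot> \<delta>)"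
    using seq_par_idn[of "\<delta> \<otimes> comult_integral" pair_mult_antipode 1] by (simp add: par_assoc seq_assoc)
  also have "\<dots> = (\<mu> \<otimes> antipode_mult3) \<odot> (\<iota> \<otimes> comult_integral \<otimes> \<iota> \<otimes> \<iota>) \<odot> ((\<delta> \<otimes> \<iota>) \<odot> \<delta>)"
    by (simp add: mult_pair_mult_antipode seq_rewrite[OF swap_comult_integral] seq_assoc)
  also have "\<dots> = frob_comult"
    by (simp add: comult_coassoc antipode_mult3_comult)
  finally show ?thesis .
qed

lemma frob_comult_mult_form:
  "frob_comult \<odot> \<mu> = (\<iota> \<otimes> (\<mu> \<odot> (\<iota> \<otimes> \<mu>))) \<odot> (copair \<otimes> \<iota> \<otimes> \<iota>)"
  "frob_comult \<odot> \<mu> = ((\<mu> \<odot> (\<mu> \<otimes> \<iota>)) \<otimes> \<iota>) \<odot> (\<iota> \<otimes> \<iota> \<otimes> copair)"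
proof -
  have slide: "(copair \<otimes> \<iota>) \<odot> \<mu> = (\<iota> \<otimes> \<iota> \<otimes> \<mu>) \<odot> (copair \<otimes> \<iota> \<otimes> \<iota>)"
    using par_def_left[of copair \<mu>] par_def_right[of copair \<mu>] by (simp add: par_idn_0_left idn_2 par_assoc)
  have merge: "(\<iota> \<otimes> \<mu>) \<odot> (\<iota> \<otimes> \<iota> \<otimes> \<mu>) = \<iota> \<otimes> (\<mu> \<odot> (\<iota> \<otimes> \<mu>))"
    by (simp add: diagram_simps)
  have "frob_comult \<odot> \<mu> = (\<iota> \<otimes> \<mu>) \<odot> ((copair \<otimes> \<iota>) \<odot> \<mu>)"
    by (simp add: frob_comult_mult_right[symmetric] seq_assoc)
  also have "\<dots> = ((\<iota> \<otimes> \<mu>) \<odot> (\<iota> \<otimes> \<iota> \<otimes> \<mu>)) \<odot> (copair \<otimes> \<iota> \<otimes> \<iota>)"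
    by (simp add: slide seq_assoc del: idn_2)
  finally show "frob_comult \<odot> \<mu> = (\<iota> \<otimes> (\<mu> \<odot> (\<iota> \<otimes> \<mu>))) \<odot> (copair \<otimes> \<iota> \<otimes> \<iota>)"
    by (simp only: merge)
next
  have slide: "(\<iota> \<otimes> copair) \<odot> \<mu> = (\<mu> \<otimes> \<iota> \<otimes> \<iota>) \<odot> (\<iota> \<otimes> \<iota> \<otimes> copair)"
    using par_def_left[of \<mu> copair] par_def_right[of \<mu> copair] by (simp add: par_idn_0_right idn_2 par_assoc)
  have merge: "(\<mu> \<otimes> \<iota>) \<odot> (\<mu> \<otimes> \<iota> \<otimes> \<iota>) = (\<mu> \<odot> (\<mu> \<otimes> \<iota>)) \<otimes> \<iota>"
    by (simp add: diagram_simps)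
  have "frob_comult \<odot> \<mu> = (\<mu> \<otimes> \<iota>) \<odot> ((\<iota> \<otimes> copair) \<odot> \<mu>)"
    by (simp add: frob_comult_mult_left seq_assoc)
  also have "\<dots> = ((\<mu> \<otimes> \<iota>) \<odot> (\<mu> \<otimes> \<iota> \<otimes> \<iota>)) \<odot> (\<iota> \<otimes> \<iota> \<otimes> copair)"
    by (simp add: slide seq_assoc del: idn_2)
  finally show "frob_comult \<odot> \<mu> = ((\<mu> \<odot> (\<mu> \<otimes> \<iota>)) \<otimes> \<iota>) \<odot> (\<iota> \<otimes> \<iota> \<otimes> copair)"
    by (simp only: merge)
qed

lemma frobenius_right: "(\<iota> \<otimes> \<mu>) \<odot> (frob_comult \<otimes> \<iota>) = frob_comult \<odot> \<mu>"
proof -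
  have split: "((\<iota> \<otimes> \<mu>) \<odot> (copair \<otimes> \<iota>)) \<otimes> \<iota> = (\<iota> \<otimes> \<mu> \<otimes> \<iota>) \<odot> (copair \<otimes> \<iota> \<otimes> \<iota>)"
    using seq_par_idn[of "copair \<otimes> \<iota>" "\<iota> \<otimes> \<mu>" 1] by (simp add: par_assoc)
  have merge: "(\<iota> \<otimes> \<mu>) \<odot> (\<iota> \<otimes> \<mu> \<otimes> \<iota>) = \<iota> \<otimes> (\<mu> \<odot> (\<mu> \<otimes> \<iota>))"
    by (simp add: diagram_simps)
  have "(\<iota> \<otimes> \<mu>) \<odot> (frob_comult \<otimes> \<iota>) = (\<iota> \<otimes> \<mu>) \<odot> ((\<iota> \<otimes> \<mu> \<otimes> \<iota>) \<odot> (copair \<otimes> \<iota> \<otimes> \<iota>))"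
    by (simp only: frob_comult_mult_right[symmetric] split)
  also have "\<dots> = (\<iota> \<otimes> (\<mu> \<odot> (\<mu> \<otimes> \<iota>))) \<odot> (copair \<otimes> \<iota> \<otimes> \<iota>)"
    by (simp add: seq_assoc[symmetric] merge del: idn_2)
  also have "\<dots> = frob_comult \<odot> \<mu>"
    by (simp only: mult_assoc frob_comult_mult_form(1))
  finally show ?thesis .
qed

lemma frob_comult_coassoc: "(frob_comult \<otimes> \<iota>) \<odot> frob_comult = (\<iota> \<otimes> frob_comult) \<odot> frob_comult"
proof -
  have "(frob_comult \<otimes> \<iota>) \<odot> frob_comult = ((frob_comult \<odot> \<mu>) \<otimes> \<iota>) \<odot> (\<iota> \<otimes> copair)"
    using seq_par_idn[of \<mu> frob_comult 1] by (simp add: frob_comult_mult_left[symmetric] seq_assoc)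
  also have "\<dots> = (\<iota> \<otimes> (\<mu> \<odot> (\<iota> \<otimes> \<mu>)) \<otimes> \<iota>) \<odot> ((copair \<otimes> \<iota> \<otimes> \<iota> \<otimes> \<iota>) \<odot> (\<iota> \<otimes> copair))"
    unfolding frob_comult_mult_form(1)
    using seq_par_idn[of "copair \<otimes> \<iota> \<otimes> \<iota>" "\<iota> \<otimes> (\<mu> \<odot> (\<iota> \<otimes> \<mu>))" 1] by (simp add: par_assoc seq_assoc)
  also have "(copair \<otimes> \<iota> \<otimes> \<iota> \<otimes> \<iota>) \<odot> (\<iota> \<otimes> copair) = (\<iota> \<otimes> \<iota> \<otimes> \<iota> \<otimes> copair) \<odot> (copair \<otimes> \<iota>)"
    by (simp add: diagram_simps)
  also have "(\<iota> \<otimes> (\<mu> \<odot> (\<iota> \<otimes> \<mu>)) \<otimes> \<iota>) \<odot> ((\<iota> \<otimes> \<iota> \<otimes> \<iota> \<otimes> copair) \<odot> (copair \<otimes> \<iota>)) =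
      (\<iota> \<otimes> (((\<mu> \<odot> (\<mu> \<otimes> \<iota>)) \<otimes> \<iota>) \<odot> (\<iota> \<otimes> \<iota> \<otimes> copair))) \<odot> (copair \<otimes> \<iota>)"
    using idn_par_seq[of "\<iota> \<otimes> \<iota> \<otimes> copair" "(\<mu> \<odot> (\<mu> \<otimes> \<iota>)) \<otimes> \<iota>" 1]
    by (simp add: par_assoc seq_assoc mult_assoc)
  also have "\<dots> = (\<iota> \<otimes> frob_comult) \<odot> frob_comult"
    unfolding frob_comult_mult_form(2)[symmetric]
    using idn_par_seq[of \<mu> frob_comult 1] by (simp add: frob_comult_mult_right[symmetric] seq_assoc)
  finally show ?thesis .
qed

lemma cointeg_left_copair: "(cointeg \<otimes> \<iota>) \<odot> copair = \<eta>"
proof -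
  have "(cointeg \<otimes> \<iota>) \<odot> copair = (cointeg \<otimes> s) \<odot> (\<delta> \<odot> integ)"
    by (simp add: copair_def comult_integral_def diagram_simps)
  also have "\<dots> = s \<odot> ((cointeg \<otimes> \<iota>) \<odot> (\<delta> \<odot> integ))"
    using par_effect_left[of cointeg s] by (simp add: seq_assoc)
  also have "\<dots> = \<eta>"
    by (simp add: seq_rewrite[OF cointeg_right] cointeg_integ seq_assoc seq_idn_right antipode_unit)
  finally show ?thesis .
qed

lemma frob_counit_left: "(cointeg \<otimes> \<iota>) \<odot> frob_comult = \<iota>"
proof -
  have "(cointeg \<otimes> \<iota>) \<odot> frob_comult = (cointeg \<otimes> \<mu>) \<odot> (copair \<otimes> \<iota>)"
    by (simp add: frob_comult_mult_right[symmetric] diagram_simps)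
  also have "\<dots> = \<mu> \<odot> ((cointeg \<otimes> \<iota> \<otimes> \<iota>) \<odot> (copair \<otimes> \<iota>))"
    using par_effect_left[of cointeg \<mu>] by (simp add: seq_assoc idn_2)
  also have "\<dots> = \<iota>"
    by (simp add: diagram_simps cointeg_left_copair mult_unit_left)
  finally show ?thesis .
qed

text \<open>\<open>\<lambda> \<circ> S\<close> is a left cointegral, since \<open>S\<close> is an invertible anti-coalgebra map.\<close>

lemma left_cointegral_cointeg_antipode: "(\<iota> \<otimes> (cointeg \<odot> s)) \<odot> \<delta> = \<eta> \<odot> (cointeg \<odot> s)"
proof -
  have "(cointeg \<otimes> \<iota>) \<odot> \<sigma> = \<iota> \<otimes> cointeg"
    using swap_natural[of \<iota> cointeg] by (simp add: swap_0 seq_idn_left)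
  then have swapped: "s \<otimes> (cointeg \<odot> s) = (cointeg \<otimes> \<iota>) \<odot> (\<sigma> \<odot> (s \<otimes> s))"
    by (simp add: seq_assoc[symmetric] diagram_simps)
  have "s \<odot> ((\<iota> \<otimes> (cointeg \<odot> s)) \<odot> \<delta>) = (s \<otimes> (cointeg \<odot> s)) \<odot> \<delta>"
    using par_effect_right[of "cointeg \<odot> s" s] by (simp add: seq_assoc)
  also have "\<dots> = (cointeg \<otimes> \<iota>) \<odot> (\<delta> \<odot> s)"
    by (simp only: swapped antipode_anti_comult; simp add: seq_assoc)
  also have "\<dots> = \<eta> \<odot> (cointeg \<odot> s)"
    by (simp add: seq_rewrite[OF cointeg_right] seq_assoc)
  finally have "sinv \<odot> (s \<odot> ((\<iota> \<otimes> (cointeg \<odot> s)) \<odot> \<delta>)) = sinv \<odot> (\<eta> \<odot> (cointeg \<odot> s))"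
    by simp
  moreover have "sinv \<odot> \<eta> = \<eta>"
    using seq_assoc[of \<eta> s sinv] by (simp add: antipode_unit antipode_inv_left seq_idn_left)
  ultimately show ?thesis
    by (simp add: seq_assoc[symmetric] antipode_inv_left seq_idn_left)
qed

lemma cointeg_right_frob_comult: "(\<iota> \<otimes> cointeg) \<odot> frob_comult = \<iota> \<otimes> (cointeg \<odot> (s \<odot> integ))"
proof -
  have right_copair: "(\<iota> \<otimes> cointeg) \<odot> copair = \<eta> \<odot> (cointeg \<odot> (s \<odot> integ))"
    by (simp add: copair_def comult_integral_def diagram_simps
        seq_rewrite[OF left_cointegral_cointeg_antipode])
  have "(\<iota> \<otimes> cointeg) \<odot> frob_comult = (\<mu> \<otimes> cointeg) \<odot> (\<iota> \<otimes> copair)"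
    by (simp add: frob_comult_mult_left diagram_simps)
  also have "\<dots> = \<mu> \<odot> ((\<iota> \<otimes> \<iota> \<otimes> cointeg) \<odot> (\<iota> \<otimes> copair))"
    using par_effect_right[of cointeg \<mu>] by (simp add: seq_assoc idn_2 par_assoc)
  also have "\<dots> = \<iota> \<otimes> (cointeg \<odot> (s \<odot> integ))"
    by (simp add: diagram_simps right_copair mult_unit_par_right)
  finally show ?thesis .
qed

text \<open>Evaluate \<open>\<lambda> \<circ> (id \<otimes> \<lambda>) \<circ> frob_comult\<close> at \<open>\<Lambda>\<close> in two ways: by the
  previous lemma it is \<open>\<lambda>(S \<Lambda>) \<lambda>(\<Lambda>)\<close>, and it is \<open>\<lambda>(\<Lambda>)\<close> because
  \<open>\<lambda> \<circ> (id \<otimes> \<lambda>) \<circ> frob_comult = \<lambda>\<close>.\<close>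

lemma cointeg_antipode_integ: "cointeg \<odot> (s \<odot> integ) = idn 0"
proof -
  define c where "c = cointeg \<odot> (s \<odot> integ)"
  have typed_c [simp]: "typed c" "src c = 0" "tgt c = 0"
    by (simp_all add: c_def)
  have twice: "cointeg \<odot> ((\<iota> \<otimes> cointeg) \<odot> frob_comult) = cointeg"
  proof -
    have "cointeg \<odot> ((\<iota> \<otimes> cointeg) \<odot> frob_comult) = (cointeg \<otimes> (cointeg \<odot> \<mu>)) \<odot> (copair \<otimes> \<iota>)"
      using par_effect_right[of "cointeg \<odot> \<mu>" cointeg]
      by (simp add: frob_comult_mult_right[symmetric] diagram_simps)
    also have "\<dots> = (cointeg \<odot> \<mu>) \<odot> ((cointeg \<otimes> \<iota> \<otimes> \<iota>) \<odot> (copair \<otimes> \<iota>))"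
      using par_effect_left[of cointeg "cointeg \<odot> \<mu>"] by (simp add: seq_assoc idn_2)
    also have "\<dots> = cointeg"
      by (simp add: diagram_simps cointeg_left_copair mult_unit_left)
    finally show ?thesis .
  qed
  have "(\<iota> \<otimes> c) \<odot> integ = integ \<otimes> c"
    using par_seq[of integ \<iota> "idn 0" c] by (simp add: seq_idn_left seq_idn_right par_idn_0_right)
  moreover have "cointeg \<odot> (integ \<otimes> c) = (cointeg \<odot> integ) \<otimes> c"
    using par_seq[of integ cointeg c "idn 0"] by (simp add: seq_idn_left seq_idn_right par_idn_0_right)
  ultimately have "c = (cointeg \<odot> ((\<iota> \<otimes> cointeg) \<odot> frob_comult)) \<odot> integ"
    by (simp add: cointeg_right_frob_comult c_def[symmetric] seq_assoc cointeg_integ par_idn_0_left)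
  then show ?thesis
    by (simp only: twice cointeg_integ c_def)
qed

lemma frob_counit_right: "(\<iota> \<otimes> cointeg) \<odot> frob_comult = \<iota>"
  by (simp add: cointeg_right_frob_comult cointeg_antipode_integ par_idn_0_right)

lemma frobenius_algebra_hopf_frobenius_coproduct:
  "frobenius_algebra_in C H m u (hopf_frobenius_coproduct C H m d S \<Lambda>) lam"
proof -
  have "mor frob_comult \<in> Hom C H (Tob C H H)"
    using typed_frob_comult(1) unfolding typed_def by simp
  moreover have "lam \<in> Hom C H (Uob C)"
    using integral_unfolded by blast
  moreover note coassoc = arg_cong[OF frob_comult_coassoc, of mor]
    and counit_left = arg_cong[OF frob_counit_left, of mor]
    and counit_right = arg_cong[OF frob_counit_right, of mor]
    and frobenius_left = arg_cong[OF frobenius_left, of mor]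
    and frobenius_right = arg_cong[OF frobenius_right, of mor]
  ultimately show ?thesis
    using hopf H_obj unfolding frobenius_algebra_in_def coalgebra_in_def hopf_algebra_in_def
    by (simp add: mor_frob_comult)
qed

lemma mult_hopf_frobenius_coproduct_unit:
  "Cmp C m (Cmp C (hopf_frobenius_coproduct C H m d S \<Lambda>) u) = Cmp C u (Cmp C e \<Lambda>)"
  using arg_cong[OF mult_frob_comult_unit, of mor] by (simp add: mor_frob_comult)

end

section \<open>Extended structures with trivial involution\<close>

lemma (in strict_smc) extended_structure_id_iff:
  assumes frob: "frobenius_algebra_in C A m u \<Delta> \<epsilon>" and \<theta>: "\<theta> \<in> Hom C (Uob C) A"
  shows "extended_structure C A m u \<Delta> \<epsilon> (Idm C A) \<theta> \<longleftrightarrow>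
    Cmp C m (Cmp C \<Delta> u) = Cmp C m (Tm C \<theta> \<theta>)"
proof -
  have A: "A \<in> Obj C" and m: "m \<in> Hom C (Tob C A A) A" and u: "u \<in> Hom C (Uob C) A"
    and \<Delta>: "\<Delta> \<in> Hom C A (Tob C A A)" and \<epsilon>: "\<epsilon> \<in> Hom C A (Uob C)"
    using frob unfolding frobenius_algebra_in_def algebra_in_def coalgebra_in_def by blast+
  have i: "Idm C A \<in> Hom C A A" using A by (rule id_in_hom)
  have \<theta>i: "Cmp C m (Tm C \<theta> (Idm C A)) \<in> Hom C A A"
    using comp_in_hom[OF tensor_in_hom[OF \<theta> i] m] tensor_obj_unit_left[OF A] by simp
  show ?thesis
    unfolding extended_structure_def frobenius_morphism_in_def
    using i \<theta> tensor_id[OF A A] comp_id_left[OF m] comp_id_right[OF m] comp_id_left[OF u]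
      comp_id_left[OF \<Delta>] comp_id_right[OF \<Delta>] comp_id_right[OF \<epsilon>] comp_id_left[OF i]
      comp_id_left[OF \<theta>i] comp_id_left[OF comp_in_hom[OF u \<Delta>]]
    by simp
qed

theorem mainTheorem16:
  fixes C :: "('o, 'm) smcat"
  assumes "strict_symmetric_monoidal_cat C"
    and "integral_hopf_algebra_in C H m u d e S Sinv \<Lambda> lam"
    and "\<theta> \<in> Hom C (Uob C) H"
    and "Cmp C m (Tm C \<theta> \<theta>) = Cmp C u (Cmp C e \<Lambda>)"
  shows "frobenius_algebra_in C H m u (hopf_frobenius_coproduct C H m d S \<Lambda>) lam
    \<and> extendable C H m u (hopf_frobenius_coproduct C H m d S \<Lambda>) lam
    \<and> extended_structure C H m u (hopf_frobenius_coproduct C H m d S \<Lambda>) lam (Idm C H) \<theta>"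
proof -
  interpret integral_hopf_algebra C H m u d e S Sinv \<Lambda> lam
    using assms(1,2)
    by unfold_locales (auto simp: integral_hopf_algebra_in_def hopf_algebra_in_def algebra_in_def)
  have frob: "frobenius_algebra_in C H m u (hopf_frobenius_coproduct C H m d S \<Lambda>) lam"
    by (rule frobenius_algebra_hopf_frobenius_coproduct)
  have "extended_structure C H m u (hopf_frobenius_coproduct C H m d S \<Lambda>) lam (Idm C H) \<theta>"
    using extended_structure_id_iff[OF frob assms(3)] assms(4) mult_hopf_frobenius_coproduct_unit
    by simp
  with frob show ?thesis
    unfolding extendable_def by blast
qed

end
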